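(* The tuple $(K[\mathcal{T}[\infty]],/,\Delta_{\mathrm s})$ is a connected graded infinitesimal bialgebra, i.e. $/$ is associative with unit the one-node tree, $\Delta_{\mathrm s}$ is coassociative, and $\Delta_{\mathrm s}(t/w)=\Delta_{\mathrm s}(t)/(\odot\otimes w)+(t\otimes\odot)/\Delta_{\mathrm s}(w)-t\otimes w$ for all $t,w\in\mathcal{T}[\infty]$. Consequently $K[\mathcal{T}[\infty]]$ is isomorphic, as an infinitesimal bialgebra, to the tensor algebra $T(\mathrm{Prim}(K[\mathcal{T}[\infty]]))$ with concatenation product and deconcatenation coproduct; in particular it is cofree (among connected coalgebras).
   Context: $K$ is a field. A tree is a finite planar rooted tree, degree = number of non-root nodes, $\odot$ the one-node tree. An $n$--tree is a tree of degree $n$ whose non-root nodes are labelled bijectively by $\{1,\dots,n\}$; $\mathcal{T}[\infty]$ is the set of all $n$--trees ($n\ge0$), $K[\mathcal{T}[\infty]]$ the vector space with basis $\mathcal{T}[\infty]$, graded by degree. Nodes are ordered by depth-first post-order (subtrees left to right recursively, then the node; root maximal); write $u_1<\dots<u_n$ for non-root nodes. For a set $A$ of non-root nodes, $t_A$ is obtained by deleting non-root nodes outside $A$ (children of a deleted node attached in order to its parent in its place), labels kept; $t_{[i,j]}=t_{\{u_h,\dots,u_k\}}$ if $i\le j$ and $[i,j]\cap[n]=[h,k]\ne\emptyset$, else $\odot$. The standardization $\mathrm s(t)$ of an $\mathbb N$-labelled tree with distinct labels relabels its nodes by $1,\dots,|t|$ preserving relative order. $\Delta_{\mathrm s}(t)=\sum_{k=0}^n\mathrm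 s(t_{[1,k]})\otimes\mathrm s(t_{[k+1,n]})$. The $m$--shift $w[m]$ adds $m$ to every label. The dot product $t\cdot w$ identifies the roots of $t$ and $w$, the root-children of $t$ (in order) followed by those of $w$. For $|t|=m$, $t/w:=t\cdot w[m]$, extended bilinearly. An infinitesimal bialgebra is an algebra $H$ with a coassociative counital coproduct $\Delta$ satisfying $\Delta(xy)=\Delta(x)(1\otimes y)+(x\otimes1)\Delta(y)-x\otimes y$; $\mathrm{Prim}(H)=\{x:\Delta(x)=1\otimes x+x\otimes1\}$; connected means graded with one-dimensional degree-0 part. *)

theory Defs
  imports "HOL-Library.Poly_Mapping"
begin

text \<open>A (planar rooted) tree is represented by the ordered list of subtrees hanging from its
  (unlabelled) root; the one-node tree is the empty list.\<close>

datatype ltree = Nd (lab: nat) (kids: "ltree list")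

type_synonym rtree = "ltree list"

fun post :: "ltree \<Rightarrow> nat list" where
  "post (Nd a ts) = concat (map post ts) @ [a]"

definition fpost :: "rtree \<Rightarrow> nat list" where
  "fpost f = concat (map post f)"

text \<open>Deleting all non-root nodes whose label is not in P; children of a deleted node are
  attached in order to its parent in its place.  (Labels are distinct, so a set of nodes is
  described by its set of labels.)\<close>
fun restr :: "nat set \<Rightarrow> ltree \<Rightarrow> ltree list" where
  "restr P (Nd a ts) =
     (if a \<in> P then [Nd a (concat (map (restr P) ts))] else concat (map (restr P) ts))"

definition frestr :: "nat set \<Rightarrow> rtree \<Rightarrow> rtree" where
  "frestr P f = concat (map (restr P) f)"

fun relab :: "(nat \<Rightarrow> nat) \<Rightarrow> ltree \<Rightarrow> ltree" where
  "relab g (Nd a ts) = Nd (g a) (map (relab g) ts)"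

text \<open>Standardization: relabel by 1,...,|t| preserving relative order.\<close>
definition std :: "rtree \<Rightarrow> rtree" where
  "std f = map (relab (\<lambda>a. card {b \<in> set (fpost f). b \<le> a})) f"

definition shift :: "nat \<Rightarrow> rtree \<Rightarrow> rtree" where
  "shift m f = map (relab (\<lambda>a. a + m)) f"

definition is_ntree :: "rtree \<Rightarrow> bool" where
  "is_ntree f \<longleftrightarrow> set (fpost f) = {1..length (fpost f)}"

typedef ntree = "{f. is_ntree f}" morphisms rep_nt Abs_nt
  by (rule exI[of _ "[]"]) (simp add: is_ntree_def fpost_def)

definition deg :: "ntree \<Rightarrow> nat" where
  "deg t = length (fpost (rep_nt t))"

definition odot :: ntree where
  "odot = Abs_nt []"

text \<open>t / w = t \<cdot> w[|t|] (dot product = identify roots, concatenate root-children).\<close>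
definition slash :: "ntree \<Rightarrow> ntree \<Rightarrow> ntree" where
  "slash t w = Abs_nt (rep_nt t @ shift (deg t) (rep_nt w))"

definition seg_lo :: "ntree \<Rightarrow> nat \<Rightarrow> ntree" where
  "seg_lo t k = Abs_nt (std (frestr (set (take k (fpost (rep_nt t)))) (rep_nt t)))"

definition seg_hi :: "ntree \<Rightarrow> nat \<Rightarrow> ntree" where
  "seg_hi t k = Abs_nt (std (frestr (set (drop k (fpost (rep_nt t)))) (rep_nt t)))"

definition smult :: "'k::comm_ring_1 \<Rightarrow> ('a \<Rightarrow>\<^sub>0 'k) \<Rightarrow> ('a \<Rightarrow>\<^sub>0 'k)" where
  "smult c p = Poly_Mapping.map (\<lambda>x. c * x) p"

definition basis :: "'a \<Rightarrow> ('a \<Rightarrow>\<^sub>0 'k::comm_ring_1)" where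
  "basis a = Poly_Mapping.single a 1"

definition lin_ext :: "('a \<Rightarrow> ('b \<Rightarrow>\<^sub>0 'k::comm_ring_1)) \<Rightarrow> ('a \<Rightarrow>\<^sub>0 'k) \<Rightarrow> ('b \<Rightarrow>\<^sub>0 'k)" where
  "lin_ext f x = (\<Sum>a\<in>Poly_Mapping.keys x. smult (Poly_Mapping.lookup x a) (f a))"

definition bil_ext :: "('a \<Rightarrow> 'b \<Rightarrow> ('c \<Rightarrow>\<^sub>0 'k::comm_ring_1)) \<Rightarrow>
    ('a \<Rightarrow>\<^sub>0 'k) \<Rightarrow> ('b \<Rightarrow>\<^sub>0 'k) \<Rightarrow> ('c \<Rightarrow>\<^sub>0 'k)" where
  "bil_ext f x y = (\<Sum>a\<in>Poly_Mapping.keys x. \<Sum>b\<in>Poly_Mapping.keys y. smult (Poly_Mapping.lookup x a * Poly_Mapping.lookup y b) (f a b))"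

definition is_linear :: "(('a \<Rightarrow>\<^sub>0 'k::comm_ring_1) \<Rightarrow> ('b \<Rightarrow>\<^sub>0 'k)) \<Rightarrow> bool" where
  "is_linear \<phi> \<longleftrightarrow> (\<forall>x y. \<phi> (x + y) = \<phi> x + \<phi> y) \<and> (\<forall>c x. \<phi> (smult c x) = smult c (\<phi> x))"

text \<open>Tensor products K[A] \<otimes> K[B] = K[A \<times> B].\<close>
definition tensor :: "('a \<Rightarrow>\<^sub>0 'k::comm_ring_1) \<Rightarrow> ('b \<Rightarrow>\<^sub>0 'k) \<Rightarrow> ('a \<times> 'b \<Rightarrow>\<^sub>0 'k)" where
  "tensor x y = bil_ext (\<lambda>a b. basis (a, b)) x y"

definition tmap :: "(('a \<Rightarrow>\<^sub>0 'k::comm_ring_1) \<Rightarrow> ('c \<Rightarrow>\<^sub>0 'k)) \<Rightarrow> (('b \<Rightarrow>\<^sub>0 'k) \<Rightarrow> ('d \<Rightarrow>\<^sub>0 'k))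
    \<Rightarrow> ('a \<times> 'b \<Rightarrow>\<^sub>0 'k) \<Rightarrow> ('c \<times> 'd \<Rightarrow>\<^sub>0 'k)" where
  "tmap f g = lin_ext (\<lambda>(a, b). tensor (f (basis a)) (g (basis b)))"

definition reassoc :: "(('a \<times> 'b) \<times> 'c \<Rightarrow>\<^sub>0 'k::comm_ring_1) \<Rightarrow> ('a \<times> ('b \<times> 'c) \<Rightarrow>\<^sub>0 'k)" where
  "reassoc = lin_ext (\<lambda>((a, b), c). basis (a, (b, c)))"

definition hmult :: "(ntree \<Rightarrow>\<^sub>0 'k::comm_ring_1) \<Rightarrow> (ntree \<Rightarrow>\<^sub>0 'k) \<Rightarrow> (ntree \<Rightarrow>\<^sub>0 'k)" where
  "hmult = bil_ext (\<lambda>t w. basis (slash t w))"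

definition hunit :: "ntree \<Rightarrow>\<^sub>0 'k::comm_ring_1" where
  "hunit = basis odot"

definition cop_basis :: "ntree \<Rightarrow> (ntree \<times> ntree \<Rightarrow>\<^sub>0 'k::comm_ring_1)" where
  "cop_basis t = (\<Sum>k\<in>{0..deg t}. basis (seg_lo t k, seg_hi t k))"

definition cop :: "(ntree \<Rightarrow>\<^sub>0 'k::comm_ring_1) \<Rightarrow> (ntree \<times> ntree \<Rightarrow>\<^sub>0 'k)" where
  "cop = lin_ext cop_basis"

definition counit :: "(ntree \<Rightarrow>\<^sub>0 'k::comm_ring_1) \<Rightarrow> 'k" where
  "counit x = Poly_Mapping.lookup x odot"

text \<open>(\<epsilon> \<otimes> id) and (id \<otimes> \<epsilon>), composed with K \<otimes> H \<cong> H \<cong> H \<otimes> K.\<close>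
definition counit_left :: "(ntree \<times> ntree \<Rightarrow>\<^sub>0 'k::comm_ring_1) \<Rightarrow> (ntree \<Rightarrow>\<^sub>0 'k)" where
  "counit_left = lin_ext (\<lambda>(a, b). smult (counit (basis a :: ntree \<Rightarrow>\<^sub>0 'k)) (basis b))"

definition counit_right :: "(ntree \<times> ntree \<Rightarrow>\<^sub>0 'k::comm_ring_1) \<Rightarrow> (ntree \<Rightarrow>\<^sub>0 'k)" where
  "counit_right = lin_ext (\<lambda>(a, b). smult (counit (basis b :: ntree \<Rightarrow>\<^sub>0 'k)) (basis a))"

definition tmult :: "(ntree \<times> ntree \<Rightarrow>\<^sub>0 'k::comm_ring_1) \<Rightarrow> (ntree \<times> ntree \<Rightarrow>\<^sub>0 'k)
    \<Rightarrow> (ntree \<times> ntree \<Rightarrow>\<^sub>0 'k)" where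
  "tmult = bil_ext (\<lambda>(a, b) (c, d). basis (slash a c, slash b d))"

definition Prim :: "(ntree \<Rightarrow>\<^sub>0 'k::comm_ring_1) set" where
  "Prim = {x. cop x = tensor hunit x + tensor x hunit}"

definition cat :: "(ntree list \<Rightarrow>\<^sub>0 'k::comm_ring_1) \<Rightarrow> (ntree list \<Rightarrow>\<^sub>0 'k) \<Rightarrow> (ntree list \<Rightarrow>\<^sub>0 'k)" where
  "cat = bil_ext (\<lambda>xs ys. basis (xs @ ys))"

definition decat :: "(ntree list \<Rightarrow>\<^sub>0 'k::comm_ring_1) \<Rightarrow> (ntree list \<times> ntree list \<Rightarrow>\<^sub>0 'k)" where
  "decat = lin_ext (\<lambda>xs. \<Sum>k\<in>{0..length xs}. basis (take k xs, drop k xs))"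

definition iota :: "(ntree \<Rightarrow>\<^sub>0 'k::comm_ring_1) \<Rightarrow> (ntree list \<Rightarrow>\<^sub>0 'k)" where
  "iota = lin_ext (\<lambda>a. basis [a])"

definition tens :: "(ntree \<Rightarrow>\<^sub>0 'k::comm_ring_1) list \<Rightarrow> (ntree list \<Rightarrow>\<^sub>0 'k)" where
  "tens vs = foldr (\<lambda>v acc. cat (iota v) acc) vs (basis [])"

definition tensor_alg :: "(ntree \<Rightarrow>\<^sub>0 'k::comm_ring_1) set \<Rightarrow> (ntree list \<Rightarrow>\<^sub>0 'k) set" where
  "tensor_alg V = {\<Sum>i<m. smult (c i) (tens (vs i)) | (m::nat) c vs. \<forall>i<m. set (vs i) \<subseteq> V}"

end

theory Submission
  imports Defs
begin

text \<open>Cutting a tree splits its post-order word into a prefix and a suffix and standardizes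
  both pieces; \<Delta>_s sums over all cuts.  The cuts of t/w are the cuts of t followed by w and
  t followed by the cuts of w, the cut between t and w being counted twice: this is the
  infinitesimal relation.  Coassociativity holds because cutting twice is cutting at two places,
  standardization commuting with restriction to sub-intervals.

  For the structure theorem, define Loday and Ronco's projection e onto primitives by
  t = \<Sum>_k e(t_[1,k]) / t_[k+1,n].  The infinitesimal relation shows by induction on the degree
  that e(t) is primitive; iterating the decomposition writes every tree as a sum of products of
  primitives, which gives a linear inverse of the map T(Prim) \<rightarrow> K[T[\<infinity>]] multiplying out
  tensors.  That it is also a left inverse rests on e(v/h) = \<epsilon>(h) v for primitive v.\<close>

lemma lookup_smult[simp]: "Poly_Mapping.lookup (smult c p) a = c * Poly_Mapping.lookup p a"
  unfolding smult_def by transfer (simp add: when_def)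

lemma lookup_basis: "Poly_Mapping.lookup (basis a) b = (if a = b then 1 else 0)"
  unfolding basis_def by (simp add: lookup_single)

lemma keys_basis: "Poly_Mapping.keys (basis a :: _ \<Rightarrow>\<^sub>0 'k::comm_ring_1) = {a}"
  by (simp add: basis_def)

lemma smult_add_right: "smult c (x + y) = smult c x + smult c y"
  by (rule poly_mapping_eqI) (simp add: lookup_add distrib_left)

lemma smult_add_left: "smult (c + d) x = smult c x + smult d x"
  by (rule poly_mapping_eqI) (simp add: lookup_add distrib_right)

lemma smult_smult[simp]: "smult c (smult d x) = smult (c * d) x"
  by (rule poly_mapping_eqI) (simp add: mult.assoc)

lemma smult_zero_right[simp]: "smult c 0 = 0"
  by (rule poly_mapping_eqI) simp

lemma smult_one[simp]: "smult 1 x = x"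
  by (rule poly_mapping_eqI) simp

lemma smult_zero_left[simp]: "smult 0 x = 0"
  by (rule poly_mapping_eqI) simp

lemma smult_sum: "smult c (sum f S) = (\<Sum>a\<in>S. smult c (f a))"
  by (induction S rule: infinite_finite_induct) (auto simp: smult_add_right)

lemma smult_minus_right: "smult c (x - y) = smult c x - smult c y"
  by (rule poly_mapping_eqI) (simp add: lookup_minus algebra_simps)

lemma smult_minus_one: "smult (-1) x = - x"
  by (rule poly_mapping_eqI) simp

lemma expand_basis: "x = (\<Sum>a\<in>Poly_Mapping.keys x. smult (Poly_Mapping.lookup x a) (basis a))"
  by (rule poly_mapping_eqI)
     (auto simp: lookup_sum lookup_basis in_keys_iff if_distrib cong: if_cong)

lemma lin_ext_superset:
  assumes "finite S" "Poly_Mapping.keys x \<subseteq> S"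
  shows "lin_ext f x = (\<Sum>a\<in>S. smult (Poly_Mapping.lookup x a) (f a))"
proof -
  have "(\<Sum>a\<in>S. smult (Poly_Mapping.lookup x a) (f a))
      = (\<Sum>a\<in>Poly_Mapping.keys x. smult (Poly_Mapping.lookup x a) (f a))"
    using assms by (intro sum.mono_neutral_right) (auto simp: in_keys_iff)
  then show ?thesis by (simp add: lin_ext_def)
qed

lemma lin_ext_add: "lin_ext f (x + y) = lin_ext f x + lin_ext f y"
proof -
  let ?S = "Poly_Mapping.keys x \<union> Poly_Mapping.keys y"
  have "Poly_Mapping.keys (x + y) \<subseteq> ?S" by (rule keys_add)
  then show ?thesis
    by (simp add: lin_ext_superset[of ?S] lookup_add smult_add_left sum.distrib)
qed

lemma lin_ext_smult: "lin_ext f (smult c x) = smult c (lin_ext f x)"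
proof -
  have "lin_ext f (smult c x)
      = (\<Sum>a\<in>Poly_Mapping.keys x. smult (Poly_Mapping.lookup (smult c x) a) (f a))"
    by (rule lin_ext_superset) (auto simp: in_keys_iff)
  then show ?thesis by (simp add: lin_ext_def smult_sum)
qed

lemma lin_ext_basis[simp]: "lin_ext f (basis a :: 'a \<Rightarrow>\<^sub>0 'k::comm_ring_1) = f a"
  by (simp add: lin_ext_superset[of "{a}"] lookup_basis basis_def)

lemma lookup_lin_ext:
  "Poly_Mapping.lookup (lin_ext f x) c
     = (\<Sum>a\<in>Poly_Mapping.keys x. Poly_Mapping.lookup x a * Poly_Mapping.lookup (f a) c)"
  by (simp add: lin_ext_def lookup_sum)

lemma is_linear_lin_ext[intro]: "is_linear (lin_ext f)"
  by (simp add: is_linear_def lin_ext_add lin_ext_smult)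

lemma is_linear_zero: "is_linear F \<Longrightarrow> F 0 = 0"
  unfolding is_linear_def by (metis smult_zero_left)

lemma is_linear_add: "is_linear F \<Longrightarrow> F (x + y) = F x + F y"
  unfolding is_linear_def by blast

lemma is_linear_smult: "is_linear F \<Longrightarrow> F (smult c x) = smult c (F x)"
  unfolding is_linear_def by blast

lemma is_linear_sum: "is_linear F \<Longrightarrow> F (sum g S) = (\<Sum>a\<in>S. F (g a))"
  by (induction S rule: infinite_finite_induct) (auto simp: is_linear_zero is_linear_def)

lemma is_linear_diff: "is_linear F \<Longrightarrow> F (x - y) = F x - F y"
proof -
  assume F: "is_linear F"
  have "F (x - y) = F (x + smult (-1) y)" by (simp add: smult_minus_one)
  also have "\<dots> = F x + smult (-1) (F y)" using F by (simp add: is_linear_def)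
  finally show ?thesis by (simp add: smult_minus_one)
qed

lemma is_linear_eq_lin_ext: "is_linear F \<Longrightarrow> F x = lin_ext (\<lambda>a. F (basis a)) x"
proof -
  assume F: "is_linear F"
  have "F x = F (\<Sum>a\<in>Poly_Mapping.keys x. smult (Poly_Mapping.lookup x a) (basis a))"
    by (subst expand_basis) (rule refl)
  also have "\<dots> = lin_ext (\<lambda>a. F (basis a)) x"
    using F by (simp add: is_linear_sum is_linear_smult lin_ext_def)
  finally show ?thesis .
qed

lemma is_linear_eqI:
  assumes "is_linear F" "is_linear G" "\<And>a. F (basis a) = G (basis a)"
  shows "F x = G x"
proof -
  have "F x = lin_ext (\<lambda>a. F (basis a)) x" by (rule is_linear_eq_lin_ext[OF assms(1)])
  also have "\<dots> = lin_ext (\<lambda>a. G (basis a)) x" using assms(3) by simp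
  also have "\<dots> = G x" by (rule is_linear_eq_lin_ext[OF assms(2), symmetric])
  finally show ?thesis .
qed

lemma is_linear_id[intro]: "is_linear (\<lambda>x. x)"
  by (simp add: is_linear_def)

lemma is_linear_plus[intro]: "is_linear F \<Longrightarrow> is_linear G \<Longrightarrow> is_linear (\<lambda>x. F x + G x)"
  by (simp add: is_linear_def smult_add_right)

lemma is_linear_minus[intro]: "is_linear F \<Longrightarrow> is_linear G \<Longrightarrow> is_linear (\<lambda>x. F x - G x)"
  by (simp add: is_linear_def smult_minus_right)

lemma is_linear_smult_const[intro]: "is_linear G \<Longrightarrow> is_linear (\<lambda>x. smult c (G x))"
  by (simp add: is_linear_def smult_add_right mult.commute)

lemma is_linear_comp: "is_linear F \<Longrightarrow> is_linear G \<Longrightarrow> is_linear (\<lambda>x. F (G x))"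
  by (simp add: is_linear_def)

lemma is_linear_comp_lin_ext[intro]: "is_linear G \<Longrightarrow> is_linear (\<lambda>x. lin_ext f (G x))"
  by (simp add: is_linear_def lin_ext_add lin_ext_smult)

lemma bil_ext_lin_ext_left: "bil_ext f x y = lin_ext (\<lambda>a. lin_ext (f a) y) x"
  by (simp add: bil_ext_def lin_ext_def smult_sum)

lemma bil_ext_lin_ext_right: "bil_ext f x y = lin_ext (\<lambda>b. lin_ext (\<lambda>a. f a b) x) y"
  unfolding bil_ext_def lin_ext_def
  by (subst sum.swap) (simp add: smult_sum mult.commute)

lemma bil_ext_basis[simp]: "bil_ext f (basis a :: 'a \<Rightarrow>\<^sub>0 'k::comm_ring_1) (basis b) = f a b"
  by (simp add: bil_ext_lin_ext_left)

lemma is_linear_bil_ext_left[intro]: "is_linear G \<Longrightarrow> is_linear (\<lambda>x. bil_ext f (G x) y)"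
  unfolding bil_ext_lin_ext_left by (rule is_linear_comp_lin_ext)

lemma is_linear_bil_ext_right[intro]: "is_linear G \<Longrightarrow> is_linear (\<lambda>x. bil_ext f y (G x))"
  unfolding bil_ext_lin_ext_right by (rule is_linear_comp_lin_ext)

lemma lookup_bil_ext:
  "Poly_Mapping.lookup (bil_ext f x y) c =
     (\<Sum>a\<in>Poly_Mapping.keys x. \<Sum>b\<in>Poly_Mapping.keys y.
        Poly_Mapping.lookup x a * Poly_Mapping.lookup y b * Poly_Mapping.lookup (f a b) c)"
  by (simp add: bil_ext_def lookup_sum)

lemma is_bilinear_eqI:
  assumes "\<And>y. is_linear (\<lambda>x. F x y)" "\<And>y. is_linear (\<lambda>x. G x y)"
    "\<And>x. is_linear (\<lambda>y. F x y)" "\<And>x. is_linear (\<lambda>y. G x y)"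
    "\<And>a b. F (basis a) (basis b) = G (basis a) (basis b)"
  shows "F x y = G x y"
proof -
  have "F (basis a) y = G (basis a) y" for a
    using is_linear_eqI[where F="F (basis a)" and G="G (basis a)"] assms(3-5) by blast
  then show ?thesis
    using is_linear_eqI[where F="\<lambda>x. F x y" and G="\<lambda>x. G x y"] assms(1,2) by blast
qed

lemma sum_keys_lookup_delta: "(\<Sum>a\<in>Poly_Mapping.keys (x :: _ \<Rightarrow>\<^sub>0 'k::comm_ring_1). Poly_Mapping.lookup x a * (if a = c then d else 0)) = Poly_Mapping.lookup x c * d"
proof -
  have "(\<Sum>a\<in>Poly_Mapping.keys x. Poly_Mapping.lookup x a * (if a = c then d else 0)) =
        (\<Sum>a\<in>Poly_Mapping.keys x. if a = c then Poly_Mapping.lookup x c * d else 0)"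
    by (intro sum.cong) auto
  also have "\<dots> = (if c \<in> Poly_Mapping.keys x then Poly_Mapping.lookup x c * d else 0)"
    by (simp add: sum.delta)
  also have "\<dots> = Poly_Mapping.lookup x c * d" by (auto simp: in_keys_iff)
  finally show ?thesis .
qed

lemma lookup_bil_ext_multiplicative:
  assumes "\<And>a b. Poly_Mapping.lookup (f a b) c = (if a = c1 \<and> b = c2 then 1 else 0)"
  shows "Poly_Mapping.lookup (bil_ext f x y) c
           = Poly_Mapping.lookup x c1 * Poly_Mapping.lookup (y :: _ \<Rightarrow>\<^sub>0 'k::comm_ring_1) c2"
proof -
  have "Poly_Mapping.lookup (bil_ext f x y) c
      = (\<Sum>a\<in>Poly_Mapping.keys x. Poly_Mapping.lookup x a * (if a = c1 then
           (\<Sum>b\<in>Poly_Mapping.keys y. Poly_Mapping.lookup y b * (if b = c2 then 1 else 0)) else 0))"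
    unfolding lookup_bil_ext assms
    by (intro sum.cong refl) (auto simp: sum_distrib_left mult.assoc intro!: sum.cong)
  then show ?thesis by (simp add: sum_keys_lookup_delta)
qed

lemma fpost_Nil[simp]: "fpost [] = []" by (simp add: fpost_def)

lemma fpost_Cons[simp]: "fpost (t # f) = post t @ fpost f" by (simp add: fpost_def)

lemma fpost_append[simp]: "fpost (f @ g) = fpost f @ fpost g" by (simp add: fpost_def)

lemma post_Nd[simp]: "post (Nd a ts) = fpost ts @ [a]" by (simp add: fpost_def)

declare post.simps[simp del]

lemma frestr_Nil[simp]: "frestr P [] = []" by (simp add: frestr_def)

lemma frestr_Cons[simp]: "frestr P (t # f) = restr P t @ frestr P f" by (simp add: frestr_def)

lemma frestr_append: "frestr P (f @ g) = frestr P f @ frestr P g" by (simp add: frestr_def)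

lemma restr_Nd[simp]: "restr P (Nd a ts) = (if a \<in> P then [Nd a (frestr P ts)] else frestr P ts)"
  by (simp add: frestr_def)

declare restr.simps[simp del]

lemma post_relab: "post (relab g t) = map g (post t)"
proof (induction t)
  case (Nd a ts)
  then have "fpost (map (relab g) ts) = map g (fpost ts)" by (induction ts) auto
  then show ?case by simp
qed

lemma fpost_relab: "fpost (map (relab g) f) = map g (fpost f)"
  by (induction f) (auto simp: post_relab)

lemma post_restr: "fpost (restr P t) = filter (\<lambda>a. a \<in> P) (post t)"
proof (induction t)
  case (Nd a ts)
  then have "fpost (frestr P ts) = filter (\<lambda>a. a \<in> P) (fpost ts)" by (induction ts) auto
  then show ?case by simp
qed

lemma fpost_frestr: "fpost (frestr P f) = filter (\<lambda>a. a \<in> P) (fpost f)"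
  by (induction f) (auto simp: post_restr)

lemma restr_cong: "(\<And>a. a \<in> set (post t) \<Longrightarrow> a \<in> P \<longleftrightarrow> a \<in> Q) \<Longrightarrow> restr P t = restr Q t"
proof (induction t)
  case (Nd a ts)
  then have "frestr P ts = frestr Q ts" by (induction ts) auto
  then show ?case using Nd.prems by simp
qed

lemma frestr_cong: "(\<And>a. a \<in> set (fpost f) \<Longrightarrow> a \<in> P \<longleftrightarrow> a \<in> Q) \<Longrightarrow> frestr P f = frestr Q f"
  by (induction f) (auto intro: restr_cong)

lemma restr_all: "set (post t) \<subseteq> P \<Longrightarrow> restr P t = [t]"
proof (induction t)
  case (Nd a ts)
  then have "frestr P ts = ts" by (induction ts) auto
  then show ?case using Nd.prems by simp
qed

lemma frestr_all: "set (fpost f) \<subseteq> P \<Longrightarrow> frestr P f = f"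
  by (induction f) (auto simp: restr_all)

lemma restr_relab: "restr Q (relab g t) = map (relab g) (restr {a. g a \<in> Q} t)"
proof (induction t)
  case (Nd a ts)
  then have "frestr Q (map (relab g) ts) = map (relab g) (frestr {a. g a \<in> Q} ts)" by (induction ts) auto
  then show ?case by simp
qed

lemma frestr_relab: "frestr Q (map (relab g) f) = map (relab g) (frestr {a. g a \<in> Q} f)"
  by (induction f) (auto simp: restr_relab)

lemma restr_restr: "frestr P (restr Q t) = restr (P \<inter> Q) t"
proof (induction t)
  case (Nd a ts)
  then have "frestr P (frestr Q ts) = frestr (P \<inter> Q) ts" by (induction ts) (auto simp: frestr_append)
  then show ?case by auto
qed

lemma frestr_frestr: "frestr P (frestr Q f) = frestr (P \<inter> Q) f"
  by (induction f) (auto simp: frestr_append restr_restr)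

lemma relab_cong: "(\<And>a. a \<in> set (post t) \<Longrightarrow> g a = h a) \<Longrightarrow> relab g t = relab h t"
proof (induction t)
  case (Nd a ts)
  then have "map (relab g) ts = map (relab h) ts" by (induction ts) auto
  then show ?case using Nd.prems by simp
qed

lemma map_relab_cong: "(\<And>a. a \<in> set (fpost f) \<Longrightarrow> g a = h a) \<Longrightarrow> map (relab g) f = map (relab h) f"
  by (induction f) (auto intro: relab_cong)

lemma relab_relab: "relab g (relab h t) = relab (\<lambda>a. g (h a)) t"
proof (induction t)
  case (Nd a ts)
  then have "map (relab g) (map (relab h) ts) = map (relab (\<lambda>a. g (h a))) ts" by (induction ts) auto
  then show ?case by simp
qed

lemma map_relab_relab: "map (relab g) (map (relab h) f) = map (relab (\<lambda>a. g (h a))) f"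
  by (simp add: relab_relab)

lemma relab_id: "relab (\<lambda>a. a) t = t"
proof (induction t)
  case (Nd a ts)
  then have "map (relab (\<lambda>a. a)) ts = ts" by (induction ts) auto
  then show ?case by simp
qed

lemma map_relab_id: "map (relab (\<lambda>a. a)) f = f"
  by (induction f) (auto simp: relab_id)

definition rank :: "nat set \<Rightarrow> nat \<Rightarrow> nat" where
  "rank S a = card {b\<in>S. b \<le> a}"

lemma std_rank: "std f = map (relab (rank (set (fpost f)))) f"
  by (simp add: std_def rank_def[abs_def])

lemma rank_strict: assumes "finite S" "a < a'" "a' \<in> S" shows "rank S a < rank S a'"
proof -
  have sub: "{b\<in>S. b\<le>a} \<subseteq> {b\<in>S. b\<le>a'}" using assms by auto
  have ne: "a' \<in> {b\<in>S. b\<le>a'}" "a' \<notin> {b\<in>S. b\<le>a}" using assms by auto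
  have "{b\<in>S. b\<le>a} \<subset> {b\<in>S. b\<le>a'}" using sub ne by blast
  then show ?thesis unfolding rank_def by (rule psubset_card_mono[rotated]) (use assms in auto)
qed

lemma rank_pos: "finite S \<Longrightarrow> a \<in> S \<Longrightarrow> 1 \<le> rank S a"
  unfolding rank_def by (subgoal_tac "a \<in> {b\<in>S. b \<le> a}") (auto simp: Suc_le_eq card_gt_0_iff)

lemma rank_le: "finite S \<Longrightarrow> rank S a \<le> card S"
  unfolding rank_def by (intro card_mono) auto

lemma rank_inj: "finite S \<Longrightarrow> inj_on (rank S) S"
proof (rule inj_onI)
  fix a b assume "finite S" "a \<in> S" "b \<in> S" "rank S a = rank S b"
  then show "a = b"
    by (metis less_irrefl_nat linorder_neqE_nat rank_strict)
qed

lemma rank_image: "finite S \<Longrightarrow> rank S ` S = {1..card S}"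
proof -
  assume fin: "finite S"
  have sub: "rank S ` S \<subseteq> {1..card S}" using rank_pos[OF fin] rank_le[OF fin] by auto
  have "card (rank S ` S) = card S" using card_image[OF rank_inj[OF fin]] .
  then show ?thesis using sub by (intro card_subset_eq) auto
qed

lemma rank_interval: "a \<in> {1..n} \<Longrightarrow> rank {1..n} a = a"
proof -
  assume "a \<in> {1..n}"
  then have "{b\<in>{1..n}. b \<le> a} = {1..a}" by auto
  then show ?thesis by (simp add: rank_def)
qed

lemma fpost_std: "fpost (std f) = map (rank (set (fpost f))) (fpost f)"
  by (simp add: std_rank fpost_relab)

lemma length_fpost_std[simp]: "length (fpost (std f)) = length (fpost f)"
  by (simp add: fpost_std)

lemma is_ntree_std: "distinct (fpost f) \<Longrightarrow> is_ntree (std f)"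
  unfolding is_ntree_def fpost_std
  by (simp add: rank_image distinct_card)

lemma is_ntree_distinct: "is_ntree f \<Longrightarrow> distinct (fpost f)"
  unfolding is_ntree_def by (metis atLeastAtMost_iff card_atLeastAtMost card_distinct diff_Suc_1 le_add1 plus_1_eq_Suc)

lemma std_id: assumes "is_ntree f" shows "std f = f"
proof -
  have H: "set (fpost f) = {1..length (fpost f)}" using assms by (simp add: is_ntree_def)
  have "map (relab (rank (set (fpost f)))) f = map (relab (\<lambda>a. a)) f"
  proof (rule map_relab_cong)
    fix a assume "a \<in> set (fpost f)"
    then show "rank (set (fpost f)) a = a" using H rank_interval[of a "length (fpost f)"] by simp
  qed
  then show ?thesis by (simp add: std_rank map_relab_id)
qed

lemma rank_strict_mono_image:
  assumes "strict_mono_on T g" "S \<subseteq> T" "a \<in> S"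
  shows "rank (g ` S) (g a) = rank S a"
proof -
  have "g b \<le> g a \<longleftrightarrow> b \<le> a" if "b \<in> S" for b
    using strict_mono_on_less_eq[OF assms(1)] assms(2,3) that by blast
  then have "{b \<in> g ` S. b \<le> g a} = g ` {b\<in>S. b \<le> a}"
    by fastforce
  moreover have "inj_on g {b\<in>S. b \<le> a}"
    using strict_mono_on_imp_inj_on[OF assms(1)] by (rule inj_on_subset) (use assms(2) in auto)
  ultimately show ?thesis by (simp add: rank_def card_image)
qed

lemma std_relab_strict_mono:
  assumes "strict_mono_on T g" "set (fpost f) \<subseteq> T"
  shows "std (map (relab g) f) = std f"
  unfolding std_rank fpost_relab map_relab_relab set_map
  by (rule map_relab_cong) (use assms in \<open>simp add: rank_strict_mono_image\<close>)

lemma std_shift: "std (shift m f) = std f"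
  unfolding shift_def by (rule std_relab_strict_mono[where T=UNIV]) (auto intro: strict_mono_onI)

lemma std_append:
  assumes lt: "\<And>a b. a \<in> set (fpost X) \<Longrightarrow> b \<in> set (fpost Y) \<Longrightarrow> a < b"
  shows "std (X @ Y) = std X @ shift (card (set (fpost X))) (std Y)"
proof -
  let ?SX = "set (fpost X)" and ?SY = "set (fpost Y)"
  let ?S = "?SX \<union> ?SY"
  have 1: "rank ?S a = rank ?SX a" if "a \<in> ?SX" for a
  proof -
    have "{b\<in>?S. b \<le> a} = {b\<in>?SX. b \<le> a}" using lt that by fastforce
    then show ?thesis by (simp add: rank_def)
  qed
  have 2: "rank ?S a = rank ?SY a + card ?SX" if "a \<in> ?SY" for a
  proof -
    have "{b\<in>?S. b \<le> a} = ?SX \<union> {b\<in>?SY. b \<le> a}" using lt that by fastforce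
    moreover have "?SX \<inter> {b\<in>?SY. b \<le> a} = {}" using lt by fastforce
    ultimately show ?thesis by (simp add: rank_def card_Un_disjoint)
  qed
  have "map (relab (rank ?S)) X = map (relab (rank ?SX)) X"
    by (rule map_relab_cong) (simp add: 1)
  moreover have "map (relab (rank ?S)) Y = map (relab (\<lambda>a. rank ?SY a + card ?SX)) Y"
    by (rule map_relab_cong) (simp add: 2)
  ultimately show ?thesis
    by (simp add: std_rank[of "X @ Y"] std_rank[of X] std_rank[of Y] shift_def map_relab_relab relab_relab)
qed

definition std_restr :: "rtree \<Rightarrow> nat set \<Rightarrow> rtree" where
  "std_restr f S = std (frestr S f)"

lemma std_restr_cong: "(\<And>a. a \<in> set (fpost f) \<Longrightarrow> a \<in> P \<longleftrightarrow> a \<in> Q) \<Longrightarrow> std_restr f P = std_restr f Q"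
  unfolding std_restr_def by (metis frestr_cong)

lemma set_fpost_frestr: "set (fpost (frestr S f)) = S \<inter> set (fpost f)"
  by (auto simp: fpost_frestr)

lemma std_restr_std_restr: "std_restr (std_restr f S) Q = std_restr f (S \<inter> {a. rank (S \<inter> set (fpost f)) a \<in> Q})"
proof -
  let ?X = "frestr S f"
  let ?g = "rank (set (fpost ?X))"
  have "std_restr (std_restr f S) Q = std (frestr Q (map (relab ?g) ?X))"
    by (simp add: std_restr_def std_rank[of ?X])
  also have "\<dots> = std (map (relab ?g) (frestr {a. ?g a \<in> Q} ?X))"
    by (simp add: frestr_relab)
  also have "\<dots> = std (frestr {a. ?g a \<in> Q} ?X)"
    by (rule std_relab_strict_mono[where T="set (fpost ?X)"]) (auto simp: fpost_frestr intro!: strict_mono_onI rank_strict)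
  also have "\<dots> = std (frestr ({a. ?g a \<in> Q} \<inter> S) f)"
    by (simp add: frestr_frestr)
  finally show ?thesis
    unfolding std_restr_def set_fpost_frestr by (metis Int_commute)
qed

definition labels_between :: "nat list \<Rightarrow> nat \<Rightarrow> nat \<Rightarrow> nat set" where
  "labels_between L i j = set (take (j - i) (drop i L))"

text \<open>fseg f i j is s(f_[i+1,j]): it keeps the nodes at post-order positions i, ..., j-1,
  counted from 0.\<close>
definition fseg :: "rtree \<Rightarrow> nat \<Rightarrow> nat \<Rightarrow> rtree" where
  "fseg f i j = std_restr f (labels_between (fpost f) i j)"

lemma filter_mem_take_drop:
  assumes "distinct L"
  shows "filter (\<lambda>x. x \<in> set (take k (drop i L))) L = take k (drop i L)"
proof -
  let ?A = "take i L" and ?B = "take k (drop i L)" and ?C = "drop k (drop i L)"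
  have L: "L = ?A @ ?B @ ?C" by (metis append_take_drop_id)
  have d: "distinct (?A @ ?B @ ?C)" using assms L by metis
  have "filter (\<lambda>x. x \<in> set ?B) ?A = []" using d by (auto simp: filter_empty_conv)
  moreover have "filter (\<lambda>x. x \<in> set ?B) ?C = []" using d by (auto simp: filter_empty_conv)
  moreover have "filter (\<lambda>x. x \<in> set ?B) ?B = ?B" by simp
  ultimately show ?thesis by (subst L) (simp only: filter_append, simp)
qed

lemma labels_between_subset: "labels_between L i j \<subseteq> set L"
  unfolding labels_between_def by (meson in_set_dropD in_set_takeD subsetI)

lemma fpost_fseg:
  assumes "distinct (fpost f)"
  shows "fpost (fseg f i j) = map (rank (labels_between (fpost f) i j)) (take (j - i) (drop i (fpost f)))"
proof -
  have "fpost (frestr (labels_between (fpost f) i j) f) = take (j - i) (drop i (fpost f))"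
    unfolding fpost_frestr labels_between_def using filter_mem_take_drop[OF assms] by simp
  then show ?thesis by (simp add: fseg_def std_restr_def fpost_std labels_between_def)
qed

lemma is_ntree_fseg: "distinct (fpost f) \<Longrightarrow> is_ntree (fseg f i j)"
  unfolding fseg_def std_restr_def by (rule is_ntree_std) (simp add: fpost_frestr)

lemma length_fpost_fseg: "distinct (fpost f) \<Longrightarrow> length (fpost (fseg f i j)) = min (j - i) (length (fpost f) - i)"
  by (simp add: fpost_fseg)

lemma fseg_fseg:
  assumes dist: "distinct (fpost f)" and bj: "b \<le> j - i"
  shows "fseg (fseg f i j) a b = fseg f (i + a) (i + b)"
proof -
  let ?L = "fpost f"
  let ?K = "take (j - i) (drop i ?L)"
  let ?S = "labels_between ?L i j"
  let ?g = "rank ?S"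
  let ?A = "set (take (b - a) (drop a ?K))"
  have S: "?S = set ?K" by (simp add: labels_between_def)
  have SL: "?S \<inter> set ?L = ?S" using labels_between_subset by blast
  have M: "fpost (fseg f i j) = map ?g ?K" using fpost_fseg[OF dist] .
  have posM: "labels_between (fpost (fseg f i j)) a b = ?g ` ?A"
    unfolding M labels_between_def by (simp add: drop_map take_map)
  have AS: "?A \<subseteq> ?S" unfolding S by (meson in_set_dropD in_set_takeD subsetI)
  have inj: "inj_on ?g ?S" by (rule rank_inj) (simp add: labels_between_def)
  have "fseg (fseg f i j) a b = std_restr (std_restr f ?S) (?g ` ?A)"
    by (simp add: fseg_def[of "fseg f i j"] posM) (simp add: fseg_def)
  also have "\<dots> = std_restr f (?S \<inter> {x. ?g x \<in> ?g ` ?A})"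
    by (simp add: std_restr_std_restr SL)
  also have "\<dots> = std_restr f ?A"
  proof (rule std_restr_cong)
    fix x assume "x \<in> set ?L"
    show "x \<in> ?S \<inter> {x. ?g x \<in> ?g ` ?A} \<longleftrightarrow> x \<in> ?A"
      using AS inj by (auto simp: inj_on_image_mem_iff) (metis inj_onD subsetD)
  qed
  also have "?A = labels_between ?L (i + a) (i + b)"
  proof -
    have "take (b - a) (drop a ?K) = take (b - a) (drop (i + a) ?L)"
      using bj by (simp add: drop_take min_def add.commute)
    then show ?thesis by (simp add: labels_between_def)
  qed
  finally show ?thesis by (simp add: fseg_def)
qed

lemma labels_between_append:
  "labels_between (xs @ ys) i j =
     labels_between xs (min i (length xs)) (min j (length xs)) \<union> labels_between ys (i - length xs) (j - length xs)"
  unfolding labels_between_def by (cases "i \<le> length xs"; cases "j \<le> length xs") (auto simp: min_def)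

lemma labels_between_map: "labels_between (map f L) i j = f ` labels_between L i j"
  unfolding labels_between_def by (simp add: take_map drop_map)

lemma frestr_shift: "frestr P (shift m B) = shift m (frestr {a. a + m \<in> P} B)"
  by (simp add: shift_def frestr_relab)

lemma fpost_shift: "fpost (shift m B) = map (\<lambda>a. a + m) (fpost B)"
  by (simp add: shift_def fpost_relab)

lemma fseg_append:
  assumes A: "is_ntree A" and B: "is_ntree B" and m: "m = length (fpost A)"
  shows "fseg (A @ shift m B) i j =
    fseg A (min i m) (min j m) @ shift (length (fpost (fseg A (min i m) (min j m)))) (fseg B (i - m) (j - m))"
proof -
  let ?LA = "fpost A" and ?LB = "fpost B"
  let ?L = "?LA @ map (\<lambda>a. a + m) ?LB"
  have dA: "distinct ?LA" using A is_ntree_distinct by auto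
  have sA: "set ?LA = {1..m}" using A m by (simp add: is_ntree_def)
  have sB: "set ?LB = {1..length ?LB}" using B by (simp add: is_ntree_def)
  have fL: "fpost (A @ shift m B) = ?L" by (simp add: fpost_shift)
  let ?P = "labels_between ?L i j"
  have P: "?P = labels_between ?LA (min i m) (min j m) \<union> (\<lambda>a. a + m) ` labels_between ?LB (i - m) (j - m)"
    by (simp add: labels_between_append labels_between_map m)
  have restr_A: "frestr ?P A = frestr (labels_between ?LA (min i m) (min j m)) A"
    using labels_between_subset[of ?LB] sA sB by (intro frestr_cong) (fastforce simp: P)
  have restr_B: "frestr {a. a + m \<in> ?P} B = frestr (labels_between ?LB (i - m) (j - m)) B"
    using labels_between_subset[of ?LA] sA sB by (intro frestr_cong) (fastforce simp: P)
  let ?X = "frestr (labels_between ?LA (min i m) (min j m)) A"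
  let ?Y = "frestr (labels_between ?LB (i - m) (j - m)) B"
  have "fseg (A @ shift m B) i j = std (?X @ shift m ?Y)"
    unfolding fseg_def std_restr_def fL frestr_append frestr_shift restr_A restr_B ..
  also have "\<dots> = std ?X @ shift (card (set (fpost ?X))) (std (shift m ?Y))"
  proof (rule std_append)
    fix a b assume "a \<in> set (fpost ?X)" "b \<in> set (fpost (shift m ?Y))"
    then show "a < b" using sA sB by (auto simp: fpost_frestr fpost_shift)
  qed
  also have "card (set (fpost ?X)) = length (fpost (std ?X))"
    using dA by (simp add: fpost_frestr distinct_card[symmetric] del: set_filter)
  finally show ?thesis by (simp add: std_shift fseg_def std_restr_def)
qed

lemma is_ntree_rep_nt: "is_ntree (rep_nt t)"
  using rep_nt by simp

lemma rep_Abs_nt: "is_ntree f \<Longrightarrow> rep_nt (Abs_nt f) = f"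
  by (simp add: Abs_nt_inverse)

lemma distinct_fpost_rep_nt: "distinct (fpost (rep_nt t))"
  by (rule is_ntree_distinct[OF is_ntree_rep_nt])

definition segment :: "ntree \<Rightarrow> nat \<Rightarrow> nat \<Rightarrow> ntree" where
  "segment t i j = Abs_nt (fseg (rep_nt t) i j)"

lemma rep_segment: "rep_nt (segment t i j) = fseg (rep_nt t) i j"
  unfolding segment_def by (rule rep_Abs_nt, rule is_ntree_fseg, rule distinct_fpost_rep_nt)

lemma deg_segment: "deg (segment t i j) = min (j - i) (deg t - i)"
  unfolding deg_def rep_segment by (simp add: length_fpost_fseg distinct_fpost_rep_nt)

lemma seg_lo_segment: "seg_lo t k = segment t 0 k"
  by (simp add: seg_lo_def segment_def fseg_def std_restr_def labels_between_def)

lemma seg_hi_segment: "seg_hi t k = segment t k (deg t)"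
  by (simp add: seg_hi_def segment_def fseg_def std_restr_def labels_between_def deg_def)

lemma segment_segment: "b \<le> j - i \<Longrightarrow> segment (segment t i j) a b = segment t (i + a) (i + b)"
  by (simp add: segment_def[of "segment t i j"] rep_segment fseg_fseg distinct_fpost_rep_nt) (simp add: segment_def)

lemma ntree_eqI: "rep_nt t = rep_nt w \<Longrightarrow> t = w"
  by (simp add: rep_nt_inject)

lemma segment_all: "segment t 0 (deg t) = t"
proof (rule ntree_eqI)
  have "frestr (labels_between (fpost (rep_nt t)) 0 (deg t)) (rep_nt t) = rep_nt t"
    by (rule frestr_all) (simp add: labels_between_def deg_def)
  then show "rep_nt (segment t 0 (deg t)) = rep_nt t"
    by (simp add: rep_segment fseg_def std_restr_def std_id is_ntree_rep_nt)
qed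

lemma rep_odot: "rep_nt odot = []"
  unfolding odot_def by (rule rep_Abs_nt) (simp add: is_ntree_def)

lemma deg_eq_0_iff: "deg t = 0 \<longleftrightarrow> t = odot"
proof
  assume "deg t = 0"
  then have "fpost (rep_nt t) = []" by (simp add: deg_def)
  then have "rep_nt t = []" by (metis append_is_Nil_conv fpost_Cons neq_Nil_conv post_Nd ltree.exhaust)
  then show "t = odot" by (intro ntree_eqI) (simp add: rep_odot)
qed (simp add: deg_def rep_odot)

lemma deg_odot[simp]: "deg odot = 0"
  by (simp add: deg_eq_0_iff)

lemma segment_empty: "i \<ge> j \<Longrightarrow> segment t i j = odot"
  by (simp add: deg_eq_0_iff[symmetric] deg_segment)

lemma segment_same[simp]: "segment t i i = odot"
  by (simp add: segment_empty)

lemma is_ntree_slash: "is_ntree (rep_nt t @ shift (deg t) (rep_nt w))"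
proof -
  have a: "set (fpost (rep_nt t)) = {1..deg t}" using is_ntree_rep_nt[of t] by (simp add: is_ntree_def deg_def)
  have b: "set (fpost (rep_nt w)) = {1..deg w}" using is_ntree_rep_nt[of w] by (simp add: is_ntree_def deg_def)
  have "(\<lambda>a. a + deg t) ` {1..deg w} = {deg t + 1..deg t + deg w}"
    by (auto simp: image_iff)
  then show ?thesis using a b by (auto simp: is_ntree_def fpost_shift deg_def)
qed

lemma rep_slash: "rep_nt (slash t w) = rep_nt t @ shift (deg t) (rep_nt w)"
  unfolding slash_def by (rule rep_Abs_nt, rule is_ntree_slash)

lemma deg_slash: "deg (slash t w) = deg t + deg w"
  by (simp add: deg_def rep_slash fpost_shift)

lemma segment_slash:
  "segment (slash t w) i j = slash (segment t (min i (deg t)) (min j (deg t))) (segment w (i - deg t) (j - deg t))"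
proof (rule ntree_eqI)
  show "rep_nt (segment (slash t w) i j) = rep_nt (slash (segment t (min i (deg t)) (min j (deg t))) (segment w (i - deg t) (j - deg t)))"
    unfolding rep_segment rep_slash
    by (subst fseg_append) (auto simp: is_ntree_rep_nt deg_def rep_segment)
qed

lemma shift_0: "shift 0 f = f" by (simp add: shift_def map_relab_id)

lemma shift_shift: "shift m (shift n f) = shift (m + n) f"
proof -
  have "(\<lambda>a. a + n + m) = (\<lambda>a. a + (m + n))" by (auto simp: fun_eq_iff)
  then show ?thesis by (simp add: shift_def relab_relab)
qed

lemma shift_append: "shift m (f @ g) = shift m f @ shift m g" by (simp add: shift_def)

lemma slash_assoc: "slash (slash t w) z = slash t (slash w z)"
  by (rule ntree_eqI) (simp add: rep_slash deg_slash shift_append shift_shift)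

lemma slash_odot_left[simp]: "slash odot w = w"
  by (rule ntree_eqI) (simp add: rep_slash rep_odot shift_0)

lemma slash_odot_right[simp]: "slash t odot = t"
  by (rule ntree_eqI) (simp add: rep_slash rep_odot shift_def)

lemma slash_eq_odot: "slash t w = odot \<longleftrightarrow> t = odot \<and> w = odot"
  by (simp add: deg_eq_0_iff[symmetric] deg_slash)

lemma hmult_basis[simp]: "hmult (basis a) (basis b) = (basis (slash a b) :: ntree \<Rightarrow>\<^sub>0 'k::comm_ring_1)"
  by (simp add: hmult_def)

lemma tensor_basis[simp]: "tensor (basis a) (basis b) = (basis (a, b) :: _ \<Rightarrow>\<^sub>0 'k::comm_ring_1)"
  by (simp add: tensor_def)

lemma tmult_basis[simp]:
  "tmult (basis (a, b)) (basis (c, d)) = (basis (slash a c, slash b d) :: _ \<Rightarrow>\<^sub>0 'k::comm_ring_1)"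
  by (simp add: tmult_def)

lemma tmap_basis: "tmap f g (basis (a, b)) = tensor (f (basis a)) (g (basis b))"
  by (simp add: tmap_def)

lemma reassoc_basis[simp]: "reassoc (basis ((a, b), c)) = (basis (a, (b, c)) :: _ \<Rightarrow>\<^sub>0 'k::comm_ring_1)"
  by (simp add: reassoc_def)

lemma cop_basis_segments:
  "cop (basis t) = (\<Sum>k\<in>{0..deg t}. basis (segment t 0 k, segment t k (deg t)) :: _ \<Rightarrow>\<^sub>0 'k::comm_ring_1)"
  by (simp add: cop_def cop_basis_def seg_lo_segment seg_hi_segment)

lemma counit_basis: "counit (basis a :: ntree \<Rightarrow>\<^sub>0 'k::comm_ring_1) = (if a = odot then 1 else 0)"
  by (simp add: counit_def lookup_basis)

lemma counit_hunit[simp]: "counit (hunit :: _ \<Rightarrow>\<^sub>0 'k::comm_ring_1) = 1"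
  by (simp add: hunit_def counit_basis)

lemma counit_left_basis[simp]:
  "counit_left (basis (a, b)) = smult (counit (basis a :: _ \<Rightarrow>\<^sub>0 'k::comm_ring_1)) (basis b)"
  by (simp add: counit_left_def)

lemma counit_right_basis[simp]:
  "counit_right (basis (a, b)) = smult (counit (basis b :: _ \<Rightarrow>\<^sub>0 'k::comm_ring_1)) (basis a)"
  by (simp add: counit_right_def)

lemma counit_smult: "counit (smult c x) = c * counit x"
  by (simp add: counit_def)

lemma counit_sum: "counit (sum f S) = (\<Sum>a\<in>S. counit (f a))"
  by (simp add: counit_def lookup_sum)

lemma is_linear_hmult_left[intro]: "is_linear (\<lambda>x. hmult x y)"
  unfolding hmult_def by (intro is_linear_bil_ext_left is_linear_id)

lemma is_linear_hmult_right[intro]: "is_linear (\<lambda>y. hmult x y)"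
  unfolding hmult_def by (intro is_linear_bil_ext_right is_linear_id)

lemma is_linear_tensor_left[intro]: "is_linear (\<lambda>x. tensor x y)"
  unfolding tensor_def by (intro is_linear_bil_ext_left is_linear_id)

lemma is_linear_tensor_right[intro]: "is_linear (\<lambda>y. tensor x y)"
  unfolding tensor_def by (intro is_linear_bil_ext_right is_linear_id)

lemma is_linear_tmult_left[intro]: "is_linear (\<lambda>x. tmult x y)"
  unfolding tmult_def by (intro is_linear_bil_ext_left is_linear_id)

lemma is_linear_tmult_right[intro]: "is_linear (\<lambda>y. tmult x y)"
  unfolding tmult_def by (intro is_linear_bil_ext_right is_linear_id)

lemma is_linear_cop[intro]: "is_linear cop"
  unfolding cop_def by (rule is_linear_lin_ext)

lemma is_linear_tmap[intro]: "is_linear (tmap f g)"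
  unfolding tmap_def by (rule is_linear_lin_ext)

lemma is_linear_reassoc[intro]: "is_linear reassoc"
  unfolding reassoc_def by (rule is_linear_lin_ext)

lemma is_linear_counit_left[intro]: "is_linear counit_left"
  unfolding counit_left_def by (rule is_linear_lin_ext)

lemma is_linear_counit_right[intro]: "is_linear counit_right"
  unfolding counit_right_def by (rule is_linear_lin_ext)

lemma is_linear_smult_counit[intro]: "is_linear (\<lambda>x. smult (counit x) (y :: _ \<Rightarrow>\<^sub>0 'k::comm_ring_1))"
  by (simp add: is_linear_def counit_def lookup_add smult_add_left)

lemma hmult_zero_left[simp]: "hmult 0 x = (0 :: _ \<Rightarrow>\<^sub>0 'k::comm_ring_1)"
  by (rule is_linear_zero[OF is_linear_hmult_left])

lemma tmult_tensor:
  "tmult (tensor a b) (tensor c d) = tensor (hmult a c) (hmult b (d :: _ \<Rightarrow>\<^sub>0 'k::comm_ring_1))"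
proof -
  have basis_case: "tmult (tensor (basis a') (basis b')) (tensor c d)
      = tensor (hmult (basis a') c) (hmult (basis b') d)" for a' b'
    by (rule is_bilinear_eqI[where F="\<lambda>c d. tmult (tensor (basis a') (basis b')) (tensor c d)"])
       (auto intro!: is_linear_comp[OF is_linear_tmult_right] is_linear_comp[OF is_linear_tensor_left]
          is_linear_comp[OF is_linear_tensor_right])
  show ?thesis
    by (rule is_bilinear_eqI[where F="\<lambda>a b. tmult (tensor a b) (tensor c d)"])
       (auto intro!: is_linear_comp[OF is_linear_tmult_left] is_linear_comp[OF is_linear_tensor_left]
          is_linear_comp[OF is_linear_tensor_right] simp: basis_case[simplified])
qed

lemma tmult_tensor_hunit_basis:
  "tmult (tensor x hunit) (basis (a, b)) = tensor (hmult x (basis a)) (basis b :: _ \<Rightarrow>\<^sub>0 'k::comm_ring_1)"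
  by (metis tensor_basis tmult_tensor hmult_basis hunit_def slash_odot_left)

lemma hmult_assoc: "hmult (hmult x y) z = hmult x (hmult y (z :: ntree \<Rightarrow>\<^sub>0 'k::comm_ring_1))"
proof -
  have "hmult (hmult (basis a) (basis b)) z = hmult (basis a) (hmult (basis b) z)" for a b
    by (rule is_linear_eqI[OF is_linear_hmult_right is_linear_comp[OF is_linear_hmult_right is_linear_hmult_right]])
       (simp add: slash_assoc)
  then have "hmult (hmult (basis a) y) z = hmult (basis a) (hmult y z)" for a
    by (rule is_linear_eqI[OF is_linear_comp[OF is_linear_hmult_left is_linear_hmult_right]
          is_linear_comp[OF is_linear_hmult_right is_linear_hmult_left]])
  then show ?thesis
    by (rule is_linear_eqI[OF is_linear_comp[OF is_linear_hmult_left is_linear_hmult_left]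
          is_linear_hmult_left])
qed

lemma hmult_hunit_left[simp]: "hmult hunit x = (x :: ntree \<Rightarrow>\<^sub>0 'k::comm_ring_1)"
  by (rule is_linear_eqI[where F="\<lambda>x. hmult hunit x"]) (auto simp: hunit_def)

lemma hmult_hunit_right[simp]: "hmult x hunit = (x :: ntree \<Rightarrow>\<^sub>0 'k::comm_ring_1)"
  by (rule is_linear_eqI[where F="\<lambda>x. hmult x hunit"]) (auto simp: hunit_def)

section \<open>Coassociativity and counit\<close>

lemma sum_triangle_reindex:
  fixes g :: "nat \<Rightarrow> nat \<Rightarrow> 'a::comm_monoid_add"
  shows "(\<Sum>k\<in>{0..n}. \<Sum>j\<in>{0..k}. g j k) = (\<Sum>j\<in>{0..n}. \<Sum>l\<in>{0..n-j}. g j (j + l))"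
proof -
  have "(\<Sum>k\<in>{0..n}. \<Sum>j\<in>{0..k}. g j k) = (\<Sum>(k,j)\<in>(SIGMA k:{0..n}. {0..k}). g j k)"
    by (rule sum.Sigma) auto
  also have "\<dots> = (\<Sum>(j,l)\<in>(SIGMA j:{0..n}. {0..n-j}). g j (j + l))"
    by (rule sum.reindex_bij_witness[where j="\<lambda>(k,j). (j, k - j)" and i="\<lambda>(j,l). (j + l, j)"]) auto
  also have "\<dots> = (\<Sum>j\<in>{0..n}. \<Sum>l\<in>{0..n-j}. g j (j + l))"
    by (rule sum.Sigma[symmetric]) auto
  finally show ?thesis .
qed

text \<open>Both sides are the sum of t_[1,j] \<otimes> t_[j+1,k] \<otimes> t_[k+1,n] over all cuts j \<le> k.\<close>

lemma cop_coassoc_basis: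
  "reassoc (tmap cop (\<lambda>z. z) (cop (basis t)))
     = tmap (\<lambda>z. z) cop (cop (basis t) :: _ \<Rightarrow>\<^sub>0 'k::comm_ring_1)"
proof -
  let ?n = "deg t"
  let ?B = "\<lambda>j k. basis (segment t 0 j, (segment t j k, segment t k ?n)) :: _ \<Rightarrow>\<^sub>0 'k"
  have "reassoc (tmap cop (\<lambda>z. z) (cop (basis t)))
      = (\<Sum>k\<in>{0..?n}. reassoc (tensor (cop (basis (segment t 0 k))) (basis (segment t k ?n)) :: _ \<Rightarrow>\<^sub>0 'k))"
    by (simp add: cop_basis_segments[of t] is_linear_sum[OF is_linear_tmap]
        is_linear_sum[OF is_linear_reassoc] tmap_basis)
  also have "\<dots> = (\<Sum>k\<in>{0..?n}. \<Sum>j\<in>{0..k}. ?B j k)"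
    by (intro sum.cong refl)
       (simp add: cop_basis_segments[of "segment t 0 k" for k] deg_segment segment_segment
        is_linear_sum[OF is_linear_tensor_left] is_linear_sum[OF is_linear_reassoc])
  also have "\<dots> = (\<Sum>j\<in>{0..?n}. \<Sum>l\<in>{0..?n-j}. ?B j (j + l))"
    by (rule sum_triangle_reindex)
  also have "\<dots> = (\<Sum>j\<in>{0..?n}. tensor (basis (segment t 0 j)) (cop (basis (segment t j ?n))))"
    by (intro sum.cong refl)
       (simp add: cop_basis_segments[of "segment t j ?n" for j] deg_segment segment_segment
        is_linear_sum[OF is_linear_tensor_right])
  also have "\<dots> = tmap (\<lambda>z. z) cop (cop (basis t))"
    by (simp add: cop_basis_segments[of t] is_linear_sum[OF is_linear_tmap] tmap_basis)
  finally show ?thesis .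
qed

lemma cop_coassoc:
  "reassoc (tmap cop (\<lambda>z. z) (cop x)) = tmap (\<lambda>z. z) cop (cop (x :: _ \<Rightarrow>\<^sub>0 'k::comm_ring_1))"
  by (rule is_linear_eqI[where F="\<lambda>x. reassoc (tmap cop (\<lambda>z. z) (cop x))"])
     (auto intro!: is_linear_comp[OF is_linear_reassoc] is_linear_comp[OF is_linear_tmap]
       simp: cop_coassoc_basis)

lemma segment_0_eq_odot_iff: "segment t 0 k = odot \<longleftrightarrow> k = 0 \<or> deg t = 0"
  by (auto simp: deg_eq_0_iff[symmetric] deg_segment min_def)

lemma counit_left_cop: "counit_left (cop x) = (x :: _ \<Rightarrow>\<^sub>0 'k::comm_ring_1)"
proof (rule is_linear_eqI[where F="\<lambda>x. counit_left (cop x)"])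
  fix t
  have "counit_left (cop (basis t) :: _ \<Rightarrow>\<^sub>0 'k)
      = (\<Sum>k\<in>{0..deg t}. if k = 0 then basis (segment t 0 (deg t)) else 0)"
    unfolding cop_basis_segments is_linear_sum[OF is_linear_counit_left]
    by (intro sum.cong) (auto simp: counit_basis segment_0_eq_odot_iff)
  then show "counit_left (cop (basis t)) = (basis t :: _ \<Rightarrow>\<^sub>0 'k)"
    by (simp add: segment_all)
qed (auto intro: is_linear_comp[OF is_linear_counit_left is_linear_cop])

lemma counit_right_cop: "counit_right (cop x) = (x :: _ \<Rightarrow>\<^sub>0 'k::comm_ring_1)"
proof (rule is_linear_eqI[where F="\<lambda>x. counit_right (cop x)"])
  fix t
  have "counit_right (cop (basis t) :: _ \<Rightarrow>\<^sub>0 'k)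
      = (\<Sum>k\<in>{0..deg t}. if k = deg t then basis (segment t 0 (deg t)) else 0)"
    unfolding cop_basis_segments is_linear_sum[OF is_linear_counit_right]
    by (intro sum.cong) (auto simp: counit_basis deg_eq_0_iff[symmetric] deg_segment)
  then show "counit_right (cop (basis t)) = (basis t :: _ \<Rightarrow>\<^sub>0 'k)"
    by (simp add: segment_all)
qed (auto intro: is_linear_comp[OF is_linear_counit_right is_linear_cop])

lemma counit_left_tensor: "counit_left (tensor x y) = smult (counit x) (y :: _ \<Rightarrow>\<^sub>0 'k::comm_ring_1)"
proof (rule is_bilinear_eqI[where F="\<lambda>x y. counit_left (tensor x y)"])
  show "is_linear (\<lambda>x. counit_left (tensor x y))" "is_linear (\<lambda>y. counit_left (tensor x y))"
    for x y :: "_ \<Rightarrow>\<^sub>0 'k"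
    by (intro is_linear_comp[OF is_linear_counit_left] is_linear_tensor_left is_linear_tensor_right)+
  show "is_linear (\<lambda>y. smult (counit x) y)" for x :: "_ \<Rightarrow>\<^sub>0 'k"
    by (intro is_linear_smult_const is_linear_id)
qed auto

section \<open>Grading and the infinitesimal relation\<close>

lemma deg_cop_keys:
  "p \<in> Poly_Mapping.keys (cop (basis t) :: _ \<Rightarrow>\<^sub>0 'k::comm_ring_1) \<Longrightarrow> deg (fst p) + deg (snd p) = deg t"
  using keys_sum[of "\<lambda>k. basis (segment t 0 k, segment t k (deg t)) :: _ \<Rightarrow>\<^sub>0 'k" "{0..deg t}"]
  by (auto simp: cop_basis_segments keys_basis deg_segment)

text \<open>The cuts of t/w at positions k \<le> deg t are those of t followed by w, the cuts at
  positions deg t + j are t followed by those of w; the cut at deg t is counted twice.\<close>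

lemma cop_hmult_basis:
  "cop (hmult (basis t) (basis w)) =
     tmult (cop (basis t)) (tensor hunit (basis w)) + tmult (tensor (basis t) hunit) (cop (basis w))
     - tensor (basis t) (basis w :: _ \<Rightarrow>\<^sub>0 'k::comm_ring_1)"
proof -
  let ?m = "deg t" and ?n = "deg w"
  let ?f = "\<lambda>k. basis (segment (slash t w) 0 k, segment (slash t w) k (?m + ?n)) :: _ \<Rightarrow>\<^sub>0 'k"
  have "cop (hmult (basis t) (basis w)) = (\<Sum>k\<in>{0..?m + ?n}. ?f k)"
    by (simp add: cop_basis_segments deg_slash)
  also have "\<dots> = (\<Sum>k\<in>{0..?m}. ?f k) + (\<Sum>k\<in>{1 + ?m..?n + ?m}. ?f k)"
    by (subst sum.ub_add_nat) (simp_all add: add.commute)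
  also have "(\<Sum>k\<in>{0..?m}. ?f k) = tmult (cop (basis t)) (tensor hunit (basis w))"
    unfolding cop_basis_segments[of t] is_linear_sum[OF is_linear_tmult_left] hunit_def tensor_basis
    by (intro sum.cong) (auto simp: segment_slash segment_all)
  also have "(\<Sum>k\<in>{1 + ?m..?n + ?m}. ?f k)
      = (\<Sum>j\<in>{1..?n}. basis (slash t (segment w 0 j), segment w j ?n))"
    unfolding sum.shift_bounds_cl_nat_ivl by (intro sum.cong) (auto simp: segment_slash segment_all)
  also have "\<dots> = tmult (tensor (basis t) hunit) (cop (basis w)) - tensor (basis t) (basis w)"
    unfolding cop_basis_segments[of w] is_linear_sum[OF is_linear_tmult_right] hunit_def tensor_basis
    by (simp add: sum.atLeast_Suc_atMost segment_all)
  finally show ?thesis by (simp add: algebra_simps)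
qed

lemma cop_hmult:
  "cop (hmult x y) =
     tmult (cop x) (tensor hunit y) + tmult (tensor x hunit) (cop y) - tensor x (y :: _ \<Rightarrow>\<^sub>0 'k::comm_ring_1)"
proof (rule is_bilinear_eqI[where F="\<lambda>x y. cop (hmult x y)"])
  show "is_linear (\<lambda>x. cop (hmult x y))" "is_linear (\<lambda>y. cop (hmult x y))" for x y :: "_ \<Rightarrow>\<^sub>0 'k"
    by (intro is_linear_comp[OF is_linear_cop] is_linear_hmult_left is_linear_hmult_right)+
  show "is_linear (\<lambda>x. tmult (cop x) (tensor hunit y) + tmult (tensor x hunit) (cop y) - tensor x y)"
    for y :: "_ \<Rightarrow>\<^sub>0 'k"
    by (intro is_linear_minus is_linear_plus is_linear_comp[OF is_linear_tmult_left is_linear_cop]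
        is_linear_comp[OF is_linear_tmult_left is_linear_tensor_left] is_linear_tensor_left)
  show "is_linear (\<lambda>y. tmult (cop x) (tensor hunit y) + tmult (tensor x hunit) (cop y) - tensor x y)"
    for x :: "_ \<Rightarrow>\<^sub>0 'k"
    by (intro is_linear_minus is_linear_plus is_linear_comp[OF is_linear_tmult_right is_linear_cop]
        is_linear_comp[OF is_linear_tmult_right is_linear_tensor_right] is_linear_tensor_right)
qed (rule cop_hmult_basis)

lemma counit_hmult: "counit (hmult x y) = counit x * counit (y :: _ \<Rightarrow>\<^sub>0 'k::comm_ring_1)"
  unfolding counit_def hmult_def
  by (rule lookup_bil_ext_multiplicative) (simp add: lookup_basis slash_eq_odot eq_commute[of odot])

lemma Prim_counit: "v \<in> Prim \<Longrightarrow> counit (v :: _ \<Rightarrow>\<^sub>0 'k::comm_ring_1) = 0"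
proof -
  assume "v \<in> Prim"
  then have "v = counit_left (tensor hunit v) + counit_left (tensor v hunit)"
    using counit_left_cop[of v] by (simp add: Prim_def is_linear_add[OF is_linear_counit_left])
  then have "smult (counit v) hunit = (0 :: _ \<Rightarrow>\<^sub>0 'k)" by (simp add: counit_left_tensor)
  then have "Poly_Mapping.lookup (smult (counit v) hunit) odot = (0::'k)" by simp
  then show ?thesis by (simp add: hunit_def lookup_basis)
qed

lemma cop_Prim_hmult:
  assumes "v \<in> Prim"
  shows "cop (hmult v h) = tensor hunit (hmult v h) + tmult (tensor v hunit) (cop (h :: _ \<Rightarrow>\<^sub>0 'k::comm_ring_1))"
proof -
  have "tmult (cop v) (tensor hunit h) = tensor hunit (hmult v h) + tensor v h"
    using assms by (simp add: Prim_def is_linear_add[OF is_linear_tmult_left] tmult_tensor)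
  then show ?thesis by (simp add: cop_hmult)
qed

lemma cop_Prim_hmult_basis:
  assumes "v \<in> Prim"
  shows "cop (hmult v (basis w)) = tensor hunit (hmult v (basis w))
           + (\<Sum>j\<in>{0..deg w}. tensor (hmult v (basis (segment w 0 j))) (basis (segment w j (deg w)))
                :: _ \<Rightarrow>\<^sub>0 'k::comm_ring_1)"
  by (simp add: cop_Prim_hmult[OF assms] cop_basis_segments[of w] is_linear_sum[OF is_linear_tmult_right]
      tmult_tensor_hunit_basis)

section \<open>The projection onto primitive elements\<close>

text \<open>Loday and Ronco's idempotent e, determined by e(\<odot>) = 0 and, for n = deg t \<ge> 1,
  t = \<Sum> e(t_[1,k]) / t_[k+1,n] summed over 1 \<le> k \<le> n.\<close>

function prim_proj_basis :: "ntree \<Rightarrow> (ntree \<Rightarrow>\<^sub>0 'k::comm_ring_1)" where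
  "prim_proj_basis t = (if deg t = 0 then 0 else
     basis t - (\<Sum>k\<in>{1..<deg t}. hmult (prim_proj_basis (segment t 0 k)) (basis (segment t k (deg t)))))"
  by auto
termination by (relation "measure deg") (auto simp: deg_segment)

declare prim_proj_basis.simps[simp del]

lemma prim_proj_basis_odot[simp]: "prim_proj_basis odot = 0"
  by (simp add: prim_proj_basis.simps)

lemma sum_first_middle_last:
  fixes f :: "nat \<Rightarrow> 'a::comm_monoid_add"
  assumes "1 \<le> n"
  shows "(\<Sum>k\<in>{0..n}. f k) = f 0 + (\<Sum>k\<in>{1..<n}. f k) + f n"
proof -
  have "(\<Sum>k\<in>{0..n}. f k) = f 0 + (\<Sum>k\<in>{Suc 0..n}. f k)" by (simp add: sum.atLeast_Suc_atMost)
  also have "(\<Sum>k\<in>{Suc 0..n}. f k) = (\<Sum>k\<in>{1..<n}. f k) + f n"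
    using assms by (simp add: sum.head_if atLeastLessThanSuc_atLeastAtMost[symmetric])
  finally show ?thesis by (simp add: add.assoc)
qed

lemma sum_prim_proj_segments:
  assumes "1 \<le> deg t"
  shows "(\<Sum>k\<in>{0..deg t}. hmult (prim_proj_basis (segment t 0 k)) (basis (segment t k (deg t))))
           = (basis t :: _ \<Rightarrow>\<^sub>0 'k::comm_ring_1)"
  using assms
  by (simp add: sum_first_middle_last segment_all prim_proj_basis.simps[of t] hunit_def[symmetric])

definition prim_proj :: "(ntree \<Rightarrow>\<^sub>0 'k::comm_ring_1) \<Rightarrow> (ntree \<Rightarrow>\<^sub>0 'k)" where
  "prim_proj = lin_ext prim_proj_basis"

definition mult_prim_proj :: "(ntree \<times> ntree \<Rightarrow>\<^sub>0 'k::comm_ring_1) \<Rightarrow> (ntree \<Rightarrow>\<^sub>0 'k)" where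
  "mult_prim_proj = lin_ext (\<lambda>(a, b). hmult (prim_proj_basis a) (basis b))"

lemma is_linear_prim_proj[intro]: "is_linear prim_proj"
  unfolding prim_proj_def by (rule is_linear_lin_ext)

lemma is_linear_mult_prim_proj[intro]: "is_linear mult_prim_proj"
  unfolding mult_prim_proj_def by (rule is_linear_lin_ext)

lemma prim_proj_basis_eq[simp]: "prim_proj (basis t) = prim_proj_basis t"
  by (simp add: prim_proj_def)

lemma prim_proj_hunit[simp]: "prim_proj hunit = 0"
  by (simp add: hunit_def)

lemma mult_prim_proj_tensor: "mult_prim_proj (tensor x y) = hmult (prim_proj x) (y :: _ \<Rightarrow>\<^sub>0 'k::comm_ring_1)"
proof (rule is_bilinear_eqI[where F="\<lambda>x y. mult_prim_proj (tensor x y)"])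
  show "is_linear (\<lambda>x. mult_prim_proj (tensor x y))" "is_linear (\<lambda>y. mult_prim_proj (tensor x y))"
    for x y :: "_ \<Rightarrow>\<^sub>0 'k"
    by (intro is_linear_comp[OF is_linear_mult_prim_proj] is_linear_tensor_left is_linear_tensor_right)+
  show "is_linear (\<lambda>x. hmult (prim_proj x) y)" for y :: "_ \<Rightarrow>\<^sub>0 'k"
    by (rule is_linear_comp[OF is_linear_hmult_left is_linear_prim_proj])
qed (auto simp: mult_prim_proj_def)

lemma mult_prim_proj_cop: "mult_prim_proj (cop x) = x - smult (counit x) (hunit :: _ \<Rightarrow>\<^sub>0 'k::comm_ring_1)"
proof (rule is_linear_eqI[where F="\<lambda>x. mult_prim_proj (cop x)"])
  show "is_linear (\<lambda>x. mult_prim_proj (cop x))"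
    by (rule is_linear_comp[OF is_linear_mult_prim_proj is_linear_cop])
  show "mult_prim_proj (cop (basis t)) = basis t - smult (counit (basis t)) (hunit :: _ \<Rightarrow>\<^sub>0 'k)" for t
  proof (cases "t = odot")
    case False
    then have "mult_prim_proj (cop (basis t)) = (basis t :: _ \<Rightarrow>\<^sub>0 'k)"
      using sum_prim_proj_segments[of t]
      unfolding cop_basis_segments is_linear_sum[OF is_linear_mult_prim_proj]
      by (simp add: mult_prim_proj_def deg_eq_0_iff[symmetric])
    then show ?thesis using False by (simp add: counit_basis)
  qed (simp add: cop_basis_segments mult_prim_proj_def counit_basis hunit_def)
qed auto

lemma prim_proj_Prim: "v \<in> Prim \<Longrightarrow> prim_proj v = (v :: _ \<Rightarrow>\<^sub>0 'k::comm_ring_1)"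
  using mult_prim_proj_cop[of v]
  by (simp add: Prim_counit Prim_def is_linear_add[OF is_linear_mult_prim_proj] mult_prim_proj_tensor)

text \<open>Apply e * id = id - \<epsilon>\<cdot>1 to v/w and use the coproduct of v/w: all terms with a proper
  cut of w vanish by induction, and what remains is v/w + e(v/w).\<close>

lemma prim_proj_Prim_hmult_basis:
  assumes v: "v \<in> Prim" and "1 \<le> deg w"
  shows "prim_proj (hmult v (basis w)) = (0 :: _ \<Rightarrow>\<^sub>0 'k::comm_ring_1)"
  using assms(2)
proof (induction w rule: measure_induct_rule[where f=deg])
  case (less w)
  let ?n = "deg w"
  let ?g = "\<lambda>j. hmult (prim_proj (hmult v (basis (segment w 0 j)))) (basis (segment w j ?n)) :: _ \<Rightarrow>\<^sub>0 'k"
  have "hmult v (basis w) = mult_prim_proj (cop (hmult v (basis w)))"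
    using mult_prim_proj_cop[of "hmult v (basis w)"] by (simp add: counit_hmult Prim_counit[OF v])
  also have "\<dots> = (\<Sum>j\<in>{0..?n}. ?g j)"
    by (simp add: cop_Prim_hmult_basis[OF v] is_linear_add[OF is_linear_mult_prim_proj]
        is_linear_sum[OF is_linear_mult_prim_proj] mult_prim_proj_tensor hunit_def)
  also have "\<dots> = ?g 0 + (\<Sum>j\<in>{1..<?n}. ?g j) + ?g ?n"
    by (rule sum_first_middle_last) (use less.prems in simp)
  also have "\<dots> = hmult v (basis w) + prim_proj (hmult v (basis w))"
  proof -
    have "(\<Sum>j\<in>{1..<?n}. ?g j) = 0"
      using less.IH by (intro sum.neutral ballI) (simp add: deg_segment)
    then show ?thesis by (simp add: segment_all hunit_def[symmetric] prim_proj_Prim[OF v])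
  qed
  finally show ?case by simp
qed

lemma prim_proj_Prim_hmult:
  assumes "v \<in> Prim"
  shows "prim_proj (hmult v h) = smult (counit h) (v :: _ \<Rightarrow>\<^sub>0 'k::comm_ring_1)"
proof (rule is_linear_eqI[where F="\<lambda>h. prim_proj (hmult v h)"])
  show "is_linear (\<lambda>h. prim_proj (hmult v h))"
    by (rule is_linear_comp[OF is_linear_prim_proj is_linear_hmult_right])
  show "prim_proj (hmult v (basis w)) = smult (counit (basis w)) v" for w
  proof (cases "w = odot")
    case False
    then have "1 \<le> deg w" by (simp add: Suc_le_eq deg_eq_0_iff[symmetric])
    then show ?thesis using False by (simp add: prim_proj_Prim_hmult_basis[OF assms] counit_basis)
  qed (simp add: counit_basis hunit_def[symmetric] prim_proj_Prim[OF assms])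
qed auto

lemma sum_prim_proj_prefix:
  assumes "1 \<le> l" "l \<le> deg t"
  shows "(\<Sum>k\<in>{1..l}. hmult (prim_proj_basis (segment t 0 k)) (basis (segment t k l)))
           = (basis (segment t 0 l) :: _ \<Rightarrow>\<^sub>0 'k::comm_ring_1)"
proof -
  let ?s = "segment t 0 l"
  have "(basis ?s :: _ \<Rightarrow>\<^sub>0 'k)
      = (\<Sum>k\<in>{0..deg ?s}. hmult (prim_proj_basis (segment ?s 0 k)) (basis (segment ?s k (deg ?s))))"
    by (rule sum_prim_proj_segments[symmetric]) (use assms in \<open>simp add: deg_segment\<close>)
  also have "\<dots> = (\<Sum>k\<in>{0..l}. hmult (prim_proj_basis (segment t 0 k)) (basis (segment t k l)))"
    using assms by (intro sum.cong) (simp_all add: deg_segment segment_segment)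
  finally show ?thesis by (simp add: sum.atLeast_Suc_atMost)
qed

text \<open>Collecting the terms of the sum over k of \<Delta>(e(t_[1,k]) / t_[k+1,n]) by the second cut l,
  each inner sum is a prefix decomposition of t_[1,l].\<close>

lemma sum_cuts_prim_proj_products:
  fixes t :: ntree and n :: nat
  defines "G \<equiv> \<lambda>k l. tensor (hmult (prim_proj_basis (segment t 0 k)) (basis (segment t k l)))
                           (basis (segment t l n)) :: _ \<Rightarrow>\<^sub>0 'k::comm_ring_1"
  assumes "deg t = n" "1 \<le> n"
  shows "(\<Sum>k\<in>{1..<n}. \<Sum>l\<in>{k..n}. G k l)
           = (\<Sum>l\<in>{1..<n}. basis (segment t 0 l, segment t l n))
             + tensor (\<Sum>k\<in>{1..<n}. hmult (prim_proj_basis (segment t 0 k)) (basis (segment t k n))) hunit"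
proof -
  let ?H = "\<lambda>l. \<Sum>k\<in>{k\<in>{1..<n}. k \<le> l}. G k l"
  have "(\<Sum>k\<in>{1..<n}. \<Sum>l\<in>{k..n}. G k l) = (\<Sum>k\<in>{1..<n}. \<Sum>l\<in>{l\<in>{0..n}. k \<le> l}. G k l)"
    by (intro sum.cong refl) auto
  also have "\<dots> = (\<Sum>l\<in>{0..n}. ?H l)"
    by (rule sum.swap_restrict) auto
  also have "\<dots> = ?H 0 + (\<Sum>l\<in>{1..<n}. ?H l) + ?H n"
    by (rule sum_first_middle_last) (use assms(3) in simp)
  also have "?H 0 = 0"
    by (intro sum.neutral) auto
  also have "?H n = tensor (\<Sum>k\<in>{1..<n}. hmult (prim_proj_basis (segment t 0 k)) (basis (segment t k n))) hunit"
  proof -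
    have "{k\<in>{1..<n}. k \<le> n} = {1..<n}" by auto
    then show ?thesis by (simp add: G_def is_linear_sum[OF is_linear_tensor_left] hunit_def)
  qed
  also have "(\<Sum>l\<in>{1..<n}. ?H l) = (\<Sum>l\<in>{1..<n}. basis (segment t 0 l, segment t l n))"
  proof (intro sum.cong refl)
    fix l assume l: "l \<in> {1..<n}"
    then have "{k\<in>{1..<n}. k \<le> l} = {1..l}" by auto
    then have "?H l = tensor (\<Sum>k\<in>{1..l}. hmult (prim_proj_basis (segment t 0 k)) (basis (segment t k l)))
        (basis (segment t l n))"
      by (simp add: G_def is_linear_sum[OF is_linear_tensor_left])
    also have "\<dots> = tensor (basis (segment t 0 l)) (basis (segment t l n))"
      using l assms(2) by (subst sum_prim_proj_prefix) auto
    finally show "?H l = basis (segment t 0 l, segment t l n)" by simp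
  qed
  finally show ?thesis by simp
qed

lemma prim_proj_basis_Prim: "1 \<le> deg t \<Longrightarrow> (prim_proj_basis t :: _ \<Rightarrow>\<^sub>0 'k::comm_ring_1) \<in> Prim"
proof (induction t rule: measure_induct_rule[where f=deg])
  case (less t)
  let ?n = "deg t"
  let ?e = "\<lambda>k. prim_proj_basis (segment t 0 k) :: _ \<Rightarrow>\<^sub>0 'k"
  define S where "S = (\<Sum>k\<in>{1..<?n}. hmult (?e k) (basis (segment t k ?n)))"
  define G where "G k l = tensor (hmult (?e k) (basis (segment t k l))) (basis (segment t l ?n))" for k l
  have cop_summand: "cop (hmult (?e k) (basis (segment t k ?n)))
      = tensor hunit (hmult (?e k) (basis (segment t k ?n))) + (\<Sum>l\<in>{k..?n}. G k l)"
    if k: "k \<in> {1..<?n}" for k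
  proof -
    have "?e k \<in> Prim" using less.IH[of "segment t 0 k"] k by (simp add: deg_segment)
    moreover have "(\<Sum>j\<in>{0..?n - k}. tensor (hmult (?e k) (basis (segment (segment t k ?n) 0 j)))
        (basis (segment (segment t k ?n) j (?n - k)))) = (\<Sum>l\<in>{k..?n}. G k l)"
      using k sum.shift_bounds_cl_nat_ivl[of "G k" 0 k "?n - k"]
      by (simp add: G_def segment_segment add.commute)
    ultimately show ?thesis by (simp add: cop_Prim_hmult_basis deg_segment)
  qed
  have "cop S = tensor hunit S + (\<Sum>k\<in>{1..<?n}. \<Sum>l\<in>{k..?n}. G k l)"
    by (simp add: S_def is_linear_sum[OF is_linear_cop] is_linear_sum[OF is_linear_tensor_right]
        cop_summand sum.distrib)
  also have "\<dots> = tensor hunit S + (\<Sum>l\<in>{1..<?n}. basis (segment t 0 l, segment t l ?n)) + tensor S hunit"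
    using sum_cuts_prim_proj_products[of t ?n] less.prems by (simp add: G_def S_def add.assoc)
  finally have "cop S = \<dots>" .
  moreover have "cop (basis t) = basis (odot, t) + (\<Sum>l\<in>{1..<?n}. basis (segment t 0 l, segment t l ?n))
      + (basis (t, odot) :: _ \<Rightarrow>\<^sub>0 'k)"
    using less.prems by (simp add: cop_basis_segments sum_first_middle_last segment_all)
  moreover have "prim_proj_basis t = basis t - S"
    using less.prems by (simp add: prim_proj_basis.simps[of t] S_def)
  ultimately show ?case
    by (simp add: Prim_def is_linear_diff[OF is_linear_cop] is_linear_diff[OF is_linear_tensor_left]
        is_linear_diff[OF is_linear_tensor_right] hunit_def)
qed

section \<open>The tensor algebra on the primitive elements\<close>

fun slash_list :: "ntree list \<Rightarrow> ntree" where
  "slash_list [] = odot"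
| "slash_list (a # xs) = slash a (slash_list xs)"

lemma slash_list_append: "slash_list (xs @ ys) = slash (slash_list xs) (slash_list ys)"
  by (induction xs) (simp_all add: slash_assoc)


definition tensor_prod :: "(ntree list \<Rightarrow>\<^sub>0 'k::comm_ring_1) \<Rightarrow> (ntree \<Rightarrow>\<^sub>0 'k)" where
  "tensor_prod = lin_ext (\<lambda>xs. basis (slash_list xs))"

lemma is_linear_tensor_prod[intro]: "is_linear tensor_prod"
  unfolding tensor_prod_def by (rule is_linear_lin_ext)

lemma tensor_prod_basis[simp]: "tensor_prod (basis xs) = basis (slash_list xs)"
  by (simp add: tensor_prod_def)

lemma tensor_prod_Nil[simp]: "tensor_prod (basis []) = (hunit :: _ \<Rightarrow>\<^sub>0 'k::comm_ring_1)"
  by (simp add: hunit_def)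

lemma cat_basis[simp]: "cat (basis xs) (basis ys) = (basis (xs @ ys) :: _ \<Rightarrow>\<^sub>0 'k::comm_ring_1)"
  by (simp add: cat_def)

lemma iota_basis[simp]: "iota (basis a) = (basis [a] :: _ \<Rightarrow>\<^sub>0 'k::comm_ring_1)"
  by (simp add: iota_def)

lemma is_linear_cat_left[intro]: "is_linear (\<lambda>x. cat x y)"
  unfolding cat_def by (intro is_linear_bil_ext_left is_linear_id)

lemma is_linear_cat_right[intro]: "is_linear (\<lambda>y. cat x y)"
  unfolding cat_def by (intro is_linear_bil_ext_right is_linear_id)

lemma is_linear_iota[intro]: "is_linear iota"
  unfolding iota_def by (rule is_linear_lin_ext)

lemma is_linear_decat[intro]: "is_linear decat"
  unfolding decat_def by (rule is_linear_lin_ext)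

lemma iota_zero[simp]: "iota 0 = (0 :: _ \<Rightarrow>\<^sub>0 'k::comm_ring_1)"
  by (rule is_linear_zero[OF is_linear_iota])

lemma cat_zero_left[simp]: "cat 0 y = (0 :: _ \<Rightarrow>\<^sub>0 'k::comm_ring_1)"
  by (rule is_linear_zero[OF is_linear_cat_left])

lemma tens_Nil[simp]: "tens [] = basis []"
  by (simp add: tens_def)

lemma tens_Cons[simp]: "tens (v # vs) = cat (iota v) (tens vs)"
  by (simp add: tens_def)

lemma tensor_prod_cat:
  "tensor_prod (cat x y) = hmult (tensor_prod x) (tensor_prod (y :: _ \<Rightarrow>\<^sub>0 'k::comm_ring_1))"
proof (rule is_bilinear_eqI[where F="\<lambda>x y. tensor_prod (cat x y)"])
  show "is_linear (\<lambda>x. tensor_prod (cat x y))" "is_linear (\<lambda>y. tensor_prod (cat x y))"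
    for x y :: "_ \<Rightarrow>\<^sub>0 'k"
    by (intro is_linear_comp[OF is_linear_tensor_prod] is_linear_cat_left is_linear_cat_right)+
  show "is_linear (\<lambda>x. hmult (tensor_prod x) (tensor_prod y))"
    "is_linear (\<lambda>y. hmult (tensor_prod x) (tensor_prod y))" for x y :: "_ \<Rightarrow>\<^sub>0 'k"
    by (intro is_linear_comp[OF is_linear_hmult_left is_linear_tensor_prod]
        is_linear_comp[OF is_linear_hmult_right is_linear_tensor_prod])+
qed (simp add: slash_list_append)

lemma tensor_prod_iota[simp]: "tensor_prod (iota v) = (v :: _ \<Rightarrow>\<^sub>0 'k::comm_ring_1)"
  by (rule is_linear_eqI[OF is_linear_comp[OF is_linear_tensor_prod is_linear_iota] is_linear_id]) simp

lemma tensor_alg_tens: "set vs \<subseteq> V \<Longrightarrow> tens vs \<in> tensor_alg V"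
  unfolding tensor_alg_def
  by (intro CollectI exI[of _ 1] exI[of _ "\<lambda>_. 1"] exI[of _ "\<lambda>_. vs"]) simp

lemma tensor_alg_zero: "0 \<in> tensor_alg V"
  unfolding tensor_alg_def by (intro CollectI exI[of _ 0]) simp

lemma sum_lessThan_add:
  fixes f :: "nat \<Rightarrow> 'a::comm_monoid_add"
  shows "(\<Sum>i<m + n. f i) = (\<Sum>i<m. f i) + (\<Sum>i<n. f (m + i))"
  by (induction n) (simp_all add: add.assoc)

lemma tensor_alg_add:
  assumes "x \<in> tensor_alg V" "y \<in> tensor_alg V"
  shows "x + y \<in> tensor_alg V"
proof -
  obtain m1 c1 vs1 where x: "x = (\<Sum>i<(m1::nat). smult (c1 i) (tens (vs1 i)))" "\<forall>i<m1. set (vs1 i) \<subseteq> V"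
    using assms(1) unfolding tensor_alg_def by blast
  obtain m2 c2 vs2 where y: "y = (\<Sum>i<(m2::nat). smult (c2 i) (tens (vs2 i)))" "\<forall>i<m2. set (vs2 i) \<subseteq> V"
    using assms(2) unfolding tensor_alg_def by blast
  define c where "c i = (if i < m1 then c1 i else c2 (i - m1))" for i
  define vs where "vs i = (if i < m1 then vs1 i else vs2 (i - m1))" for i
  have "x + y = (\<Sum>i<m1 + m2. smult (c i) (tens (vs i)))"
    unfolding sum_lessThan_add x y c_def vs_def by simp
  moreover have "\<forall>i<m1 + m2. set (vs i) \<subseteq> V" using x y by (auto simp: vs_def)
  ultimately show ?thesis unfolding tensor_alg_def by blast
qed

lemma tensor_alg_smult: "x \<in> tensor_alg V \<Longrightarrow> smult c x \<in> tensor_alg V"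
  unfolding tensor_alg_def
  by (force simp: smult_sum)

lemma tensor_alg_sum: "(\<And>a. a \<in> S \<Longrightarrow> f a \<in> tensor_alg V) \<Longrightarrow> sum f S \<in> tensor_alg V"
  by (induction S rule: infinite_finite_induct) (auto intro: tensor_alg_zero tensor_alg_add)

lemma tensor_alg_cat_iota:
  assumes "v \<in> V" "y \<in> tensor_alg V"
  shows "cat (iota v) y \<in> tensor_alg V"
proof -
  obtain m c vs where y: "y = (\<Sum>i<(m::nat). smult (c i) (tens (vs i)))" "\<forall>i<m. set (vs i) \<subseteq> V"
    using assms(2) unfolding tensor_alg_def by blast
  have "cat (iota v) y = (\<Sum>i<m. smult (c i) (tens (v # vs i)))"
    unfolding y is_linear_sum[OF is_linear_cat_right] is_linear_smult[OF is_linear_cat_right] by simp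
  then show ?thesis
    unfolding tensor_alg_def using y(2) assms(1)
    by (intro CollectI exI[of _ m] exI[of _ c] exI[of _ "\<lambda>i. v # vs i"]) simp
qed

lemma tensor_alg_linear_eqI:
  assumes "is_linear F" "is_linear G" "\<And>vs. set vs \<subseteq> V \<Longrightarrow> F (tens vs) = G (tens vs)"
    and "x \<in> tensor_alg V"
  shows "F x = G x"
  using assms(4) unfolding tensor_alg_def
  by (auto simp: is_linear_sum[OF assms(1)] is_linear_sum[OF assms(2)]
      is_linear_smult[OF assms(1)] is_linear_smult[OF assms(2)] assms(3))

lemma counit_tensor_prod_tens:
  "set vs \<subseteq> Prim \<Longrightarrow> counit (tensor_prod (tens vs)) = Poly_Mapping.lookup (tens vs :: _ \<Rightarrow>\<^sub>0 'k::comm_ring_1) []"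
proof (induction vs)
  case (Cons v vs)
  have "Poly_Mapping.lookup (cat (iota v) (tens vs)) [] = Poly_Mapping.lookup (iota v) [] * Poly_Mapping.lookup (tens vs :: _ \<Rightarrow>\<^sub>0 'k) []"
    unfolding cat_def by (rule lookup_bil_ext_multiplicative) (simp add: lookup_basis eq_commute[of "[]"])
  moreover have "Poly_Mapping.lookup (iota v) [] = (0 :: 'k)"
    unfolding iota_def lookup_lin_ext by (simp add: lookup_basis)
  ultimately show ?case
    using Cons by (simp add: tensor_prod_cat counit_hmult Prim_counit)
qed (simp add: lookup_basis counit_basis)

lemma counit_tensor_prod:
  "x \<in> tensor_alg Prim \<Longrightarrow> counit (tensor_prod x) = Poly_Mapping.lookup (x :: _ \<Rightarrow>\<^sub>0 'k::comm_ring_1) []"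
  unfolding tensor_alg_def
  by (auto simp: is_linear_sum[OF is_linear_tensor_prod] is_linear_smult[OF is_linear_tensor_prod]
      counit_sum counit_smult lookup_sum counit_tensor_prod_tens)

text \<open>The inverse of tensor_prod: iterate the decomposition t = \<Sum> e(t_[1,k]) / t_[k+1,n].\<close>

function tensor_decomp_basis :: "ntree \<Rightarrow> (ntree list \<Rightarrow>\<^sub>0 'k::comm_ring_1)" where
  "tensor_decomp_basis t = (if deg t = 0 then basis [] else
     (\<Sum>k\<in>{1..deg t}. cat (iota (prim_proj_basis (segment t 0 k))) (tensor_decomp_basis (segment t k (deg t)))))"
  by auto
termination by (relation "measure deg") (auto simp: deg_segment)

declare tensor_decomp_basis.simps[simp del]

definition tensor_decomp :: "(ntree \<Rightarrow>\<^sub>0 'k::comm_ring_1) \<Rightarrow> (ntree list \<Rightarrow>\<^sub>0 'k)" where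
  "tensor_decomp = lin_ext tensor_decomp_basis"

lemma is_linear_tensor_decomp[intro]: "is_linear tensor_decomp"
  unfolding tensor_decomp_def by (rule is_linear_lin_ext)

lemma tensor_decomp_basis_eq[simp]: "tensor_decomp (basis t) = tensor_decomp_basis t"
  by (simp add: tensor_decomp_def)

lemma tensor_decomp_basis_odot[simp]: "tensor_decomp_basis odot = basis []"
  by (simp add: tensor_decomp_basis.simps)

lemma tensor_prod_tensor_decomp_basis: "tensor_prod (tensor_decomp_basis t) = (basis t :: _ \<Rightarrow>\<^sub>0 'k::comm_ring_1)"
proof (induction t rule: measure_induct_rule[where f=deg])
  case (less t)
  show ?case
  proof (cases "t = odot")
    case False
    then have n: "1 \<le> deg t" by (simp add: Suc_le_eq deg_eq_0_iff[symmetric])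
    have "tensor_prod (tensor_decomp_basis t :: _ \<Rightarrow>\<^sub>0 'k)
        = (\<Sum>k\<in>{1..deg t}. hmult (prim_proj_basis (segment t 0 k)) (tensor_prod (tensor_decomp_basis (segment t k (deg t)))))"
      using n by (simp add: tensor_decomp_basis.simps[of t] is_linear_sum[OF is_linear_tensor_prod] tensor_prod_cat)
    also have "\<dots> = (\<Sum>k\<in>{0..deg t}. hmult (prim_proj_basis (segment t 0 k)) (basis (segment t k (deg t))))"
      by (simp add: less.IH deg_segment sum.atLeast_Suc_atMost)
    also have "\<dots> = basis t"
      by (rule sum_prim_proj_segments[OF n])
    finally show ?thesis .
  qed (simp add: hunit_def)
qed

lemma tensor_prod_tensor_decomp: "tensor_prod (tensor_decomp x) = (x :: _ \<Rightarrow>\<^sub>0 'k::comm_ring_1)"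
  by (rule is_linear_eqI[OF is_linear_comp[OF is_linear_tensor_prod is_linear_tensor_decomp] is_linear_id])
     (simp add: tensor_prod_tensor_decomp_basis)

lemma tensor_decomp_basis_in_tensor_alg: "(tensor_decomp_basis t :: _ \<Rightarrow>\<^sub>0 'k::comm_ring_1) \<in> tensor_alg Prim"
proof (induction t rule: measure_induct_rule[where f=deg])
  case (less t)
  show ?case
  proof (cases "deg t = 0")
    case True
    then show ?thesis using tensor_alg_tens[of "[]" Prim] by (simp add: deg_eq_0_iff)
  next
    case False
    then show ?thesis
      unfolding tensor_decomp_basis.simps[of t]
      by (auto intro!: tensor_alg_sum tensor_alg_cat_iota prim_proj_basis_Prim less.IH simp: deg_segment)
  qed
qed

lemma tensor_decomp_in_tensor_alg: "(tensor_decomp x :: _ \<Rightarrow>\<^sub>0 'k::comm_ring_1) \<in> tensor_alg Prim"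
  unfolding tensor_decomp_def lin_ext_def
  by (intro tensor_alg_sum tensor_alg_smult tensor_decomp_basis_in_tensor_alg)


definition cat_prim_decomp :: "(ntree \<times> ntree \<Rightarrow>\<^sub>0 'k::comm_ring_1) \<Rightarrow> (ntree list \<Rightarrow>\<^sub>0 'k)" where
  "cat_prim_decomp = lin_ext (\<lambda>(a, b). cat (iota (prim_proj_basis a)) (tensor_decomp_basis b))"

lemma is_linear_cat_prim_decomp[intro]: "is_linear cat_prim_decomp"
  unfolding cat_prim_decomp_def by (rule is_linear_lin_ext)

lemma cat_prim_decomp_tensor:
  "cat_prim_decomp (tensor x y) = cat (iota (prim_proj x)) (tensor_decomp (y :: _ \<Rightarrow>\<^sub>0 'k::comm_ring_1))"
proof (rule is_bilinear_eqI[where F="\<lambda>x y. cat_prim_decomp (tensor x y)"])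
  show "is_linear (\<lambda>x. cat_prim_decomp (tensor x y))" "is_linear (\<lambda>y. cat_prim_decomp (tensor x y))"
    for x y :: "_ \<Rightarrow>\<^sub>0 'k"
    by (intro is_linear_comp[OF is_linear_cat_prim_decomp] is_linear_tensor_left is_linear_tensor_right)+
  show "is_linear (\<lambda>x. cat (iota (prim_proj x)) (tensor_decomp y))" for y :: "_ \<Rightarrow>\<^sub>0 'k"
    by (intro is_linear_comp[OF is_linear_cat_left] is_linear_comp[OF is_linear_iota is_linear_prim_proj])
  show "is_linear (\<lambda>y. cat (iota (prim_proj x)) (tensor_decomp y))" for x :: "_ \<Rightarrow>\<^sub>0 'k"
    by (rule is_linear_comp[OF is_linear_cat_right is_linear_tensor_decomp])
qed (simp add: cat_prim_decomp_def)

lemma tensor_decomp_via_cop: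
  "tensor_decomp x = smult (counit x) (basis []) + cat_prim_decomp (cop (x :: _ \<Rightarrow>\<^sub>0 'k::comm_ring_1))"
proof (rule is_linear_eqI[where F=tensor_decomp])
  show "is_linear (\<lambda>x. smult (counit x) (basis []) + cat_prim_decomp (cop (x :: _ \<Rightarrow>\<^sub>0 'k)))"
    by (intro is_linear_plus is_linear_smult_counit is_linear_comp[OF is_linear_cat_prim_decomp is_linear_cop])
  show "tensor_decomp (basis t) = smult (counit (basis t)) (basis []) + cat_prim_decomp (cop (basis t) :: _ \<Rightarrow>\<^sub>0 'k)"
    for t
  proof (cases "deg t = 0")
    case True
    then show ?thesis by (simp add: deg_eq_0_iff cop_basis_segments cat_prim_decomp_def counit_basis)
  next
    case False
    have "cat_prim_decomp (cop (basis t) :: _ \<Rightarrow>\<^sub>0 'k)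
        = (\<Sum>k\<in>{0..deg t}. cat (iota (prim_proj_basis (segment t 0 k))) (tensor_decomp_basis (segment t k (deg t))))"
      unfolding cop_basis_segments is_linear_sum[OF is_linear_cat_prim_decomp] by (simp add: cat_prim_decomp_def)
    also have "\<dots> = tensor_decomp_basis t"
      using False by (simp add: sum.atLeast_Suc_atMost tensor_decomp_basis.simps[of t])
    finally show ?thesis using False by (simp add: counit_basis deg_eq_0_iff)
  qed
qed auto

lemma tensor_decomp_Prim_hmult:
  assumes "v \<in> Prim"
  shows "tensor_decomp (hmult v h) = cat (iota v) (tensor_decomp (h :: _ \<Rightarrow>\<^sub>0 'k::comm_ring_1))"
proof (rule is_linear_eqI[where F="\<lambda>h. tensor_decomp (hmult v h)"])
  show "is_linear (\<lambda>h. tensor_decomp (hmult v h))"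
    by (rule is_linear_comp[OF is_linear_tensor_decomp is_linear_hmult_right])
  show "is_linear (\<lambda>h. cat (iota v) (tensor_decomp h))"
    by (rule is_linear_comp[OF is_linear_cat_right is_linear_tensor_decomp])
  fix w
  let ?n = "deg w"
  have "tensor_decomp (hmult v (basis w)) = cat_prim_decomp (cop (hmult v (basis w)))"
    by (simp add: tensor_decomp_via_cop[of "hmult v (basis w)"] counit_hmult Prim_counit[OF assms])
  also have "\<dots> = (\<Sum>j\<in>{0..?n}. cat (iota (prim_proj (hmult v (basis (segment w 0 j)))))
                      (tensor_decomp_basis (segment w j ?n)))"
    by (simp add: cop_Prim_hmult_basis[OF assms] is_linear_add[OF is_linear_cat_prim_decomp]
        is_linear_sum[OF is_linear_cat_prim_decomp] cat_prim_decomp_tensor)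
  also have "\<dots> = (\<Sum>j\<in>{0..?n}. if j = 0 then cat (iota v) (tensor_decomp_basis w) else 0)"
    by (intro sum.cong refl)
       (auto simp: prim_proj_Prim_hmult[OF assms] counit_basis segment_0_eq_odot_iff segment_all)
  finally show "tensor_decomp (hmult v (basis w)) = cat (iota v) (tensor_decomp (basis w))" by simp
qed

lemma tensor_decomp_tensor_prod:
  assumes "y \<in> tensor_alg Prim"
  shows "tensor_decomp (tensor_prod y) = (y :: _ \<Rightarrow>\<^sub>0 'k::comm_ring_1)"
proof (rule tensor_alg_linear_eqI[OF is_linear_comp[OF is_linear_tensor_decomp is_linear_tensor_prod]
      is_linear_id _ assms])
  show "set vs \<subseteq> Prim \<Longrightarrow> tensor_decomp (tensor_prod (tens vs)) = tens vs" for vs :: "(_ \<Rightarrow>\<^sub>0 'k) list"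
    by (induction vs) (simp_all add: hunit_def tensor_prod_cat tensor_decomp_Prim_hmult)
qed

lemma bij_betw_tensor_prod:
  "bij_betw (tensor_prod :: _ \<Rightarrow> ntree \<Rightarrow>\<^sub>0 'k::comm_ring_1) (tensor_alg Prim) UNIV"
  by (rule bij_betw_byWitness[where f'=tensor_decomp])
     (auto simp: tensor_decomp_tensor_prod tensor_prod_tensor_decomp tensor_decomp_in_tensor_alg)


definition cat_tensor :: "(ntree list \<times> ntree list \<Rightarrow>\<^sub>0 'k::comm_ring_1)
    \<Rightarrow> (ntree list \<times> ntree list \<Rightarrow>\<^sub>0 'k) \<Rightarrow> (ntree list \<times> ntree list \<Rightarrow>\<^sub>0 'k)" where
  "cat_tensor = bil_ext (\<lambda>(a, b) (c, d). basis (a @ c, b @ d))"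

lemma is_linear_cat_tensor_left[intro]: "is_linear (\<lambda>x. cat_tensor x y)"
  unfolding cat_tensor_def by (intro is_linear_bil_ext_left is_linear_id)

lemma is_linear_cat_tensor_right[intro]: "is_linear (\<lambda>y. cat_tensor x y)"
  unfolding cat_tensor_def by (intro is_linear_bil_ext_right is_linear_id)

lemma cat_tensor_basis[simp]:
  "cat_tensor (basis (a, b)) (basis (c, d)) = (basis (a @ c, b @ d) :: _ \<Rightarrow>\<^sub>0 'k::comm_ring_1)"
  by (simp add: cat_tensor_def)

lemma decat_basis:
  "decat (basis xs) = (\<Sum>k\<in>{0..length xs}. basis (take k xs, drop k xs) :: _ \<Rightarrow>\<^sub>0 'k::comm_ring_1)"
  by (simp add: decat_def)

lemma decat_cat_iota:
  "decat (cat (iota v) y)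
     = tensor (basis []) (cat (iota v) y) + cat_tensor (tensor (iota v) (basis [])) (decat (y :: _ \<Rightarrow>\<^sub>0 'k::comm_ring_1))"
proof (rule is_bilinear_eqI[where F="\<lambda>v y. decat (cat (iota v) y)"])
  show "is_linear (\<lambda>v. decat (cat (iota v) y))" "is_linear (\<lambda>y. decat (cat (iota v) y))"
    for v y :: "_ \<Rightarrow>\<^sub>0 'k"
    by (intro is_linear_comp[OF is_linear_decat] is_linear_comp[OF is_linear_cat_left is_linear_iota]
        is_linear_cat_right)+
  show "is_linear (\<lambda>v. tensor (basis []) (cat (iota v) y) + cat_tensor (tensor (iota v) (basis [])) (decat y))"
    for y :: "_ \<Rightarrow>\<^sub>0 'k"
    by (intro is_linear_plus is_linear_comp[OF is_linear_tensor_right is_linear_comp[OF is_linear_cat_left is_linear_iota]]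
        is_linear_comp[OF is_linear_cat_tensor_left is_linear_comp[OF is_linear_tensor_left is_linear_iota]])
  show "is_linear (\<lambda>y. tensor (basis []) (cat (iota v) y) + cat_tensor (tensor (iota v) (basis [])) (decat y))"
    for v :: "_ \<Rightarrow>\<^sub>0 'k"
    by (intro is_linear_plus is_linear_comp[OF is_linear_tensor_right is_linear_cat_right]
        is_linear_comp[OF is_linear_cat_tensor_right is_linear_decat])
  show "decat (cat (iota (basis a)) (basis xs)) = tensor (basis []) (cat (iota (basis a)) (basis xs))
      + cat_tensor (tensor (iota (basis a)) (basis [])) (decat (basis xs) :: _ \<Rightarrow>\<^sub>0 'k)" for a xs
  proof -
    have "decat (basis (a # xs)) = (\<Sum>k\<in>{0..Suc (length xs)}. basis (take k (a # xs), drop k (a # xs)) :: _ \<Rightarrow>\<^sub>0 'k)"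
      by (simp add: decat_basis del: sum.atLeast0_atMost_Suc)
    also have "\<dots> = basis ([], a # xs) + (\<Sum>k\<in>{0..length xs}. basis (a # take k xs, drop k xs))"
      by (subst sum.atLeast0_atMost_Suc_shift) simp
    finally show ?thesis
      by (simp add: decat_basis is_linear_sum[OF is_linear_cat_tensor_right])
  qed
qed

lemma tmap_tensor_prod_tensor:
  "tmap tensor_prod tensor_prod (tensor x y) = tensor (tensor_prod x) (tensor_prod (y :: _ \<Rightarrow>\<^sub>0 'k::comm_ring_1))"
proof (rule is_bilinear_eqI[where F="\<lambda>x y. tmap tensor_prod tensor_prod (tensor x y)"])
  show "is_linear (\<lambda>x. tmap tensor_prod tensor_prod (tensor x y))"
    "is_linear (\<lambda>y. tmap tensor_prod tensor_prod (tensor x y))" for x y :: "_ \<Rightarrow>\<^sub>0 'k"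
    by (intro is_linear_comp[OF is_linear_tmap] is_linear_tensor_left is_linear_tensor_right)+
  show "is_linear (\<lambda>x. tensor (tensor_prod x) (tensor_prod y))"
    "is_linear (\<lambda>y. tensor (tensor_prod x) (tensor_prod y))" for x y :: "_ \<Rightarrow>\<^sub>0 'k"
    by (intro is_linear_comp[OF is_linear_tensor_left is_linear_tensor_prod]
        is_linear_comp[OF is_linear_tensor_right is_linear_tensor_prod])+
qed (simp add: tmap_basis)

lemma tmap_tensor_prod_cat_tensor:
  "tmap tensor_prod tensor_prod (cat_tensor z w)
     = tmult (tmap tensor_prod tensor_prod z) (tmap tensor_prod tensor_prod (w :: _ \<Rightarrow>\<^sub>0 'k::comm_ring_1))"
proof (rule is_bilinear_eqI[where F="\<lambda>z w. tmap tensor_prod tensor_prod (cat_tensor z w)"])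
  show "is_linear (\<lambda>z. tmap tensor_prod tensor_prod (cat_tensor z w))"
    "is_linear (\<lambda>w. tmap tensor_prod tensor_prod (cat_tensor z w))" for z w :: "_ \<Rightarrow>\<^sub>0 'k"
    by (intro is_linear_comp[OF is_linear_tmap] is_linear_cat_tensor_left is_linear_cat_tensor_right)+
  show "is_linear (\<lambda>z. tmult (tmap tensor_prod tensor_prod z) (tmap tensor_prod tensor_prod w))"
    "is_linear (\<lambda>w. tmult (tmap tensor_prod tensor_prod z) (tmap tensor_prod tensor_prod w))"
    for z w :: "_ \<Rightarrow>\<^sub>0 'k"
    by (intro is_linear_comp[OF is_linear_tmult_left is_linear_tmap]
        is_linear_comp[OF is_linear_tmult_right is_linear_tmap])+
  show "tmap tensor_prod tensor_prod (cat_tensor (basis p) (basis q))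
      = tmult (tmap tensor_prod tensor_prod (basis p)) (tmap tensor_prod tensor_prod (basis q) :: _ \<Rightarrow>\<^sub>0 'k)"
    for p q :: "ntree list \<times> ntree list"
    by (cases p, cases q) (simp add: tmap_basis slash_list_append)
qed

lemma cop_tensor_prod_tens:
  "set vs \<subseteq> Prim \<Longrightarrow>
     cop (tensor_prod (tens vs)) = tmap tensor_prod tensor_prod (decat (tens vs :: _ \<Rightarrow>\<^sub>0 'k::comm_ring_1))"
proof (induction vs)
  case Nil
  then show ?case by (simp add: hunit_def cop_basis_segments decat_basis tmap_basis)
next
  case (Cons v vs)
  then show ?case
    by (simp add: tensor_prod_cat cop_Prim_hmult decat_cat_iota is_linear_add[OF is_linear_tmap]
        tmap_tensor_prod_tensor tmap_tensor_prod_cat_tensor hunit_def)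
qed

lemma cop_tensor_prod:
  "x \<in> tensor_alg Prim \<Longrightarrow> cop (tensor_prod x) = tmap tensor_prod tensor_prod (decat (x :: _ \<Rightarrow>\<^sub>0 'k::comm_ring_1))"
  by (rule tensor_alg_linear_eqI[OF is_linear_comp[OF is_linear_cop is_linear_tensor_prod]
        is_linear_comp[OF is_linear_tmap is_linear_decat] cop_tensor_prod_tens])

theorem proposition4p2:
  shows
    "(\<forall>x y z :: ntree \<Rightarrow>\<^sub>0 'k::field. hmult (hmult x y) z = hmult x (hmult y z))
   \<and> (\<forall>x :: ntree \<Rightarrow>\<^sub>0 'k. hmult hunit x = x \<and> hmult x hunit = x)
   \<and> (\<forall>x :: ntree \<Rightarrow>\<^sub>0 'k. reassoc (tmap cop (\<lambda>z. z) (cop x)) = tmap (\<lambda>z. z) cop (cop x))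
   \<and> (\<forall>x :: ntree \<Rightarrow>\<^sub>0 'k. counit_left (cop x) = x \<and> counit_right (cop x) = x)
   \<and> (\<forall>x y :: ntree \<Rightarrow>\<^sub>0 'k. cop (hmult x y) =
        tmult (cop x) (tensor hunit y) + tmult (tensor x hunit) (cop y) - tensor x y)
   \<and> (\<forall>t w. deg (slash t w) = deg t + deg w)
   \<and> (\<forall>t. \<forall>p \<in> Poly_Mapping.keys (cop (basis t) :: ntree \<times> ntree \<Rightarrow>\<^sub>0 'k). deg (fst p) + deg (snd p) = deg t)
   \<and> {t. deg t = 0} = {odot}
   \<and> (\<exists>\<phi> :: (ntree list \<Rightarrow>\<^sub>0 'k) \<Rightarrow> (ntree \<Rightarrow>\<^sub>0 'k).
        is_linear \<phi>
      \<and> bij_betw \<phi> (tensor_alg Prim) UNIV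
      \<and> \<phi> (basis []) = hunit
      \<and> (\<forall>x\<in>tensor_alg Prim. \<forall>y\<in>tensor_alg Prim. \<phi> (cat x y) = hmult (\<phi> x) (\<phi> y))
      \<and> (\<forall>x\<in>tensor_alg Prim. cop (\<phi> x) = tmap \<phi> \<phi> (decat x))
      \<and> (\<forall>x\<in>tensor_alg Prim. counit (\<phi> x) = Poly_Mapping.lookup x []))"
proof (intro conjI allI ballI exI[of _ tensor_prod])
  show "bij_betw (tensor_prod :: _ \<Rightarrow> ntree \<Rightarrow>\<^sub>0 'k) (tensor_alg Prim) UNIV"
    by (rule bij_betw_tensor_prod)
qed (auto simp: hmult_assoc cop_coassoc counit_left_cop counit_right_cop cop_hmult deg_slash
      deg_cop_keys deg_eq_0_iff tensor_prod_cat cop_tensor_prod counit_tensor_prod hunit_def[symmetric])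

end
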